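(* Let $n,N\ge 1$, $T>0$, $\mathbf c\in\mathbb R^n_+$, $\mathbf d\in\mathbb R^n_+$, $C\ge 0$ with $d_{i+1}-d_i\le c_{i+1}$ for all $i\in[n-1]$. Suppose the support set $\mathcal U\subseteq\mathbb R^n$ is nonempty, compact and convex, let $\widehat{\mathbf u}^1,\dots,\widehat{\mathbf u}^N\in\mathcal U$ and $\epsilon>0$. (i) If $p=1$, then problem W-DRAS has optimal value $$\widehat Z(N,\epsilon)=\inf\Big\{\epsilon\rho+\tfrac1N\sum_{j=1}^N\beta_j:\ \rho\in\mathbb R,\ \boldsymbol\beta\in\mathbb R^N,\ \mathbf s\in\mathcal S,\ \rho\ge 0,\ \beta_j\mathbf e_1\mathbf e_1^\top-\mathbf H^1_j(\rho,\mathbf s)\in\mathcal{COP}(\mathcal K_1^j)\ \forall j\in[N]\Big\},$$ where $\mathbf e_1$ is the first standard basis vector of $\mathbb R^{3n+1}$, and W-DRAS and this program have the same set of optimal solutions $\mathbf s$. (ii) If $p=2$, then $$\widehat Z(N,\epsilon)=\inf\Big\{\epsilon^2\rho+\tfrac1N\sum_{j=1}^N\beta_j:\ \rho\in\mathbb R,\ \boldsymbol\beta\in\mathbb R^N,\ \mathbf s\in\mathcal S,\ \rho\ge 0,\ \beta_j\mathbf e_1\mathbf e_1^\top-\mathbf H^2_j(\rho,\mathbf s)\in\mathcal{COP}(\mathcal K_2)\ \forall j\in[N]\Big\},$$ where $\mathbf e_1$ is the first standard basis vector of $\mathbb R^{2n+1}$, and W-DRAS and this program have the same set of optimal solutions $\mathbf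 s$.
   Context: Notation: $[m]=\{1,\dots,m\}$, $[i,j]_{\mathbb Z}=\{i,\dots,j\}$; $\mathbf e$ is the all-ones vector and $\mathbf I$ the identity in the appropriate dimension; $\mathbb S^k$ denotes symmetric $k\times k$ matrices. The feasible schedules are $\mathcal S=\{\mathbf s\in\mathbb R^n:\mathbf s\ge 0,\ \sum_i s_i\le T\}$. For $\mathbf s\in\mathcal S$ and $\mathbf u\in\mathbb R^n$, $f(\mathbf s,\mathbf u)$ is the optimal value of the linear program $\min_{\mathbf w\in\mathbb R^{n+1},\mathbf v\in\mathbb R^n}\sum_{i=1}^n(c_iw_i+d_iv_i)+Cw_{n+1}$ s.t. $w_i-v_{i-1}=u_{i-1}+w_{i-1}-s_{i-1}$ for $i\in[2,n+1]_{\mathbb Z}$, $\mathbf w\ge0$, $w_1=0$, $\mathbf v\ge0$. For $p\ge1$ and distributions $\mathbb Q_1,\mathbb Q_2$ on $\mathcal U$, the Wasserstein distance is $d_p(\mathbb Q_1,\mathbb Q_2)=\big(\inf_{\Pi}\mathbb E_\Pi[\|\mathbf u_1-\mathbf u_2\|_p^p]\big)^{1/p}$, infimum over joint distributions $\Pi$ of $(\mathbf u_1,\mathbf u_2)$ with marginals $\mathbb Q_1,\mathbb Q_2$. With $\widehat{\mathbb P}^N=\frac1N\sum_{j}\delta_{\widehat{\mathbf u}^j}$, the ambiguity set is $\mathcal D_p(\widehat{\mathbb P}^N,\epsilon)=\{\mathbb Q$ probability distribution on $\mathcal U: d_p(\mathbb Q,\widehat{\mathbb P}^N)\le\epsilon\}$,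 and W-DRAS is the problem $\widehat Z(N,\epsilon)=\min_{\mathbf s\in\mathcal S}\sup_{\mathbb Q\in\mathcal D_p(\widehat{\mathbb P}^N,\epsilon)}\mathbb E_{\mathbb Q}[f(\mathbf s,\mathbf u)]$. Let $\mathcal Y=\{\mathbf y\in\mathbb R^n: -y_i\le d_i\ \forall i\in[n];\ y_{i-1}-y_i\le c_i\ \forall i\in[2,n]_{\mathbb Z};\ y_n\le C\}$. Define $\mathcal F_1^j=\{(\mathbf u^+,\mathbf u^-,\mathbf y)\in\mathbb R^n_+\times\mathbb R^n_+\times\mathbb R^n:\mathbf u^+-\mathbf u^-+\widehat{\mathbf u}^j\in\mathcal U,\ \mathbf y\in\mathcal Y\}$ and $\mathcal F_2=\{(\mathbf u,\mathbf y)\in\mathbb R^n\times\mathbb R^n:\mathbf u\in\mathcal U,\mathbf y\in\mathcal Y\}$, and their perspective cones $\mathcal K_1^j=\mathrm{closure}\{(t,\mathbf u^+,\mathbf u^-,\mathbf y):(\mathbf u^+/t,\mathbf u^-/t,\mathbf y/t)\in\mathcal F_1^j,\ t>0\}\subseteq\mathbb R^{3n+1}$ and $\mathcal K_2=\mathrm{closure}\{(t,\mathbf u,\mathbf y):(\mathbf u/t,\mathbf y/t)\in\mathcal F_2,\ t>0\}\subseteq\mathbb R^{2n+1}$. For a closed convex cone $\mathcal K\subseteq\mathbb R^k$, $\mathcal{COP}(\mathcal K)=\{\mathbf M\in\mathbb S^k:\mathbf x^\top\mathbf M\mathbf x\ge0\ \forall\mathbf x\in\mathcal K\}$. For $\rho\in\mathbb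 R$, $\mathbf s\in\mathbb R^n$, define the block matrices (block sizes $1,n,n,n$ resp. $1,n,n$) $$\mathbf H^1_j(\rho,\mathbf s)=\begin{bmatrix}0&-\tfrac12\rho\mathbf e^\top&-\tfrac12\rho\mathbf e^\top&\tfrac12(\widehat{\mathbf u}^j-\mathbf s)^\top\\-\tfrac12\rho\mathbf e&0&0&\tfrac12\mathbf I\\-\tfrac12\rho\mathbf e&0&0&-\tfrac12\mathbf I\\\tfrac12(\widehat{\mathbf u}^j-\mathbf s)&\tfrac12\mathbf I&-\tfrac12\mathbf I&0\end{bmatrix},\quad \mathbf H^2_j(\rho,\mathbf s)=\begin{bmatrix}-\rho\|\widehat{\mathbf u}^j\|_2^2&\rho(\widehat{\mathbf u}^j)^\top&-\tfrac12\mathbf s^\top\\\rho\widehat{\mathbf u}^j&-\rho\mathbf I&\tfrac12\mathbf I\\-\tfrac12\mathbf s&\tfrac12\mathbf I&0\end{bmatrix}.$$ *)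

theory Defs
  imports "HOL-Analysis.Analysis" "HOL-Probability.Probability"
begin

text \<open>A vector of R^n is a function nat => real whose entries 1..n are the
coordinates and which vanishes at every other index (zero padding).  A vector of R^k used
as argument of a k x k matrix is a function nat => real with entries 0..k-1 (zero elsewhere);
a k x k matrix is a function nat => nat => real with entries indexed by 0..k-1.
Topology on nat => real is the product topology (which on zero-padded vectors is the
Euclidean topology of R^n); measures on R^n are Borel measures on nat => real.\<close>

definition vecs :: "nat \<Rightarrow> (nat \<Rightarrow> real) set" where
  "vecs n = {x. \<forall>i. (i = 0 \<or> n < i) \<longrightarrow> x i = 0}"

definition vecs0 :: "nat \<Rightarrow> (nat \<Rightarrow> real) set" where
  "vecs0 k = {x. \<forall>i. k \<le> i \<longrightarrow> x i = 0}"

definition convex_vecs :: "nat \<Rightarrow> (nat \<Rightarrow> real) set \<Rightarrow> bool" where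
  "convex_vecs n U \<longleftrightarrow> (\<forall>x\<in>U. \<forall>y\<in>U. \<forall>l::real. 0 \<le> l \<and> l \<le> 1 \<longrightarrow>
      (\<lambda>i. l * x i + (1 - l) * y i) \<in> U)"

definition sched :: "nat \<Rightarrow> real \<Rightarrow> (nat \<Rightarrow> real) set" where
  "sched n T = {s \<in> vecs n. (\<forall>i\<in>{1..n}. 0 \<le> s i) \<and> (\<Sum>i=1..n. s i) \<le> T}"

definition lp_feasible :: "nat \<Rightarrow> (nat \<Rightarrow> real) \<Rightarrow> (nat \<Rightarrow> real) \<Rightarrow> (nat \<Rightarrow> real) \<Rightarrow> (nat \<Rightarrow> real) \<Rightarrow> bool" where
  "lp_feasible n s u w v \<longleftrightarrow>
     (\<forall>i\<in>{2..n+1}. w i - v (i-1) = u (i-1) + w (i-1) - s (i-1)) \<and>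
     (\<forall>i\<in>{1..n+1}. 0 \<le> w i) \<and> w 1 = 0 \<and> (\<forall>i\<in>{1..n}. 0 \<le> v i)"

definition recourse :: "nat \<Rightarrow> (nat \<Rightarrow> real) \<Rightarrow> (nat \<Rightarrow> real) \<Rightarrow> real \<Rightarrow> (nat \<Rightarrow> real) \<Rightarrow> (nat \<Rightarrow> real) \<Rightarrow> real" where
  "recourse n c d C s u = Inf {(\<Sum>i=1..n. c i * w i + d i * v i) + C * w (n+1) | w v. lp_feasible n s u w v}"

definition distr_on :: "(nat \<Rightarrow> real) set \<Rightarrow> (nat \<Rightarrow> real) measure \<Rightarrow> bool" where
  "distr_on U Q \<longleftrightarrow> prob_space Q \<and> sets Q = sets borel \<and> emeasure Q U = 1"

definition couplings :: "(nat \<Rightarrow> real) measure \<Rightarrow> (nat \<Rightarrow> real) measure \<Rightarrow> ((nat \<Rightarrow> real) \<times> (nat \<Rightarrow> real)) measure set" where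
  "couplings Q1 Q2 = {P. prob_space P \<and> sets P = sets (borel \<Otimes>\<^sub>M borel) \<and>
       distr P borel fst = Q1 \<and> distr P borel snd = Q2}"

definition pnorm_pow :: "real \<Rightarrow> nat \<Rightarrow> (nat \<Rightarrow> real) \<Rightarrow> (nat \<Rightarrow> real) \<Rightarrow> real" where
  "pnorm_pow p n x y = (\<Sum>i=1..n. \<bar>x i - y i\<bar> powr p)"

definition wdist :: "real \<Rightarrow> nat \<Rightarrow> (nat \<Rightarrow> real) measure \<Rightarrow> (nat \<Rightarrow> real) measure \<Rightarrow> real" where
  "wdist p n Q1 Q2 = (INF P \<in> couplings Q1 Q2. (\<integral>z. pnorm_pow p n (fst z) (snd z) \<partial>P)) powr (1/p)"

definition empirical :: "nat \<Rightarrow> (nat \<Rightarrow> nat \<Rightarrow> real) \<Rightarrow> (nat \<Rightarrow> real) measure" where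
  "empirical N uh = distr (measure_pmf (map_pmf uh (pmf_of_set {1..N}))) borel (\<lambda>x. x)"

definition ambiguity :: "real \<Rightarrow> nat \<Rightarrow> (nat \<Rightarrow> real) set \<Rightarrow> nat \<Rightarrow> (nat \<Rightarrow> nat \<Rightarrow> real) \<Rightarrow> real \<Rightarrow> (nat \<Rightarrow> real) measure set" where
  "ambiguity p n U N uh eps = {Q. distr_on U Q \<and> wdist p n Q (empirical N uh) \<le> eps}"

definition wdras_obj :: "real \<Rightarrow> nat \<Rightarrow> (nat \<Rightarrow> real) \<Rightarrow> (nat \<Rightarrow> real) \<Rightarrow> real \<Rightarrow> (nat \<Rightarrow> real) set \<Rightarrow> nat \<Rightarrow> (nat \<Rightarrow> nat \<Rightarrow> real) \<Rightarrow> real \<Rightarrow> (nat \<Rightarrow> real) \<Rightarrow> ereal" where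
  "wdras_obj p n c d C U N uh eps s =
     (SUP Q \<in> ambiguity p n U N uh eps. ereal (\<integral>u. recourse n c d C s u \<partial>Q))"

definition wdras_val :: "real \<Rightarrow> nat \<Rightarrow> real \<Rightarrow> (nat \<Rightarrow> real) \<Rightarrow> (nat \<Rightarrow> real) \<Rightarrow> real \<Rightarrow> (nat \<Rightarrow> real) set \<Rightarrow> nat \<Rightarrow> (nat \<Rightarrow> nat \<Rightarrow> real) \<Rightarrow> real \<Rightarrow> ereal" where
  "wdras_val p n T c d C U N uh eps = (INF s \<in> sched n T. wdras_obj p n c d C U N uh eps s)"

definition wdras_opt :: "real \<Rightarrow> nat \<Rightarrow> real \<Rightarrow> (nat \<Rightarrow> real) \<Rightarrow> (nat \<Rightarrow> real) \<Rightarrow> real \<Rightarrow> (nat \<Rightarrow> real) set \<Rightarrow> nat \<Rightarrow> (nat \<Rightarrow> nat \<Rightarrow> real) \<Rightarrow> real \<Rightarrow> (nat \<Rightarrow> real) set" where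
  "wdras_opt p n T c d C U N uh eps =
     {s \<in> sched n T. wdras_obj p n c d C U N uh eps s = wdras_val p n T c d C U N uh eps}"

definition Yset :: "nat \<Rightarrow> (nat \<Rightarrow> real) \<Rightarrow> (nat \<Rightarrow> real) \<Rightarrow> real \<Rightarrow> (nat \<Rightarrow> real) set" where
  "Yset n c d C = {y \<in> vecs n. (\<forall>i\<in>{1..n}. - y i \<le> d i) \<and> (\<forall>i\<in>{2..n}. y (i-1) - y i \<le> c i) \<and> y n \<le> C}"

text \<open>Block b (b = 0,1,2,...) of a stacked vector x = (x 0, block 0, block 1, ...), as a vector of R^n.\<close>
definition blk :: "nat \<Rightarrow> (nat \<Rightarrow> real) \<Rightarrow> nat \<Rightarrow> nat \<Rightarrow> real" where
  "blk n x b = (\<lambda>i. if 1 \<le> i \<and> i \<le> n then x (b * n + i) else 0)"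

definition F1 :: "nat \<Rightarrow> (nat \<Rightarrow> real) \<Rightarrow> (nat \<Rightarrow> real) \<Rightarrow> real \<Rightarrow> (nat \<Rightarrow> real) set \<Rightarrow> (nat \<Rightarrow> real)
     \<Rightarrow> ((nat \<Rightarrow> real) \<times> (nat \<Rightarrow> real) \<times> (nat \<Rightarrow> real)) set" where
  "F1 n c d C U uhj = {(up, um, y). up \<in> vecs n \<and> um \<in> vecs n \<and>
      (\<forall>i\<in>{1..n}. 0 \<le> up i \<and> 0 \<le> um i) \<and> (\<lambda>i. up i - um i + uhj i) \<in> U \<and> y \<in> Yset n c d C}"

definition F2 :: "nat \<Rightarrow> (nat \<Rightarrow> real) \<Rightarrow> (nat \<Rightarrow> real) \<Rightarrow> real \<Rightarrow> (nat \<Rightarrow> real) set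
     \<Rightarrow> ((nat \<Rightarrow> real) \<times> (nat \<Rightarrow> real)) set" where
  "F2 n c d C U = {(u, y). u \<in> U \<and> y \<in> Yset n c d C}"

text \<open>Perspective cones K_1^j in R^{3n+1} and K_2 in R^{2n+1} (coordinate 0 is t).\<close>
definition K1 :: "nat \<Rightarrow> (nat \<Rightarrow> real) \<Rightarrow> (nat \<Rightarrow> real) \<Rightarrow> real \<Rightarrow> (nat \<Rightarrow> real) set \<Rightarrow> (nat \<Rightarrow> real) \<Rightarrow> (nat \<Rightarrow> real) set" where
  "K1 n c d C U uhj = closure {x \<in> vecs0 (3*n+1). 0 < x 0 \<and>
      ((\<lambda>i. blk n x 0 i / x 0), (\<lambda>i. blk n x 1 i / x 0), (\<lambda>i. blk n x 2 i / x 0)) \<in> F1 n c d C U uhj}"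

definition K2 :: "nat \<Rightarrow> (nat \<Rightarrow> real) \<Rightarrow> (nat \<Rightarrow> real) \<Rightarrow> real \<Rightarrow> (nat \<Rightarrow> real) set \<Rightarrow> (nat \<Rightarrow> real) set" where
  "K2 n c d C U = closure {x \<in> vecs0 (2*n+1). 0 < x 0 \<and>
      ((\<lambda>i. blk n x 0 i / x 0), (\<lambda>i. blk n x 1 i / x 0)) \<in> F2 n c d C U}"

definition COP :: "nat \<Rightarrow> (nat \<Rightarrow> real) set \<Rightarrow> (nat \<Rightarrow> nat \<Rightarrow> real) set" where
  "COP k K = {M. (\<forall>i<k. \<forall>j<k. M i j = M j i) \<and>
      (\<forall>x\<in>K. 0 \<le> (\<Sum>i<k. \<Sum>j<k. x i * M i j * x j))}"

text \<open>Block number (0 for the leading scalar, 1,2,3 for the n-blocks) and position within the block.\<close>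
definition bnum :: "nat \<Rightarrow> nat \<Rightarrow> nat" where
  "bnum n i = (if i = 0 then 0 else (i - 1) div n + 1)"

definition bpos :: "nat \<Rightarrow> nat \<Rightarrow> nat" where
  "bpos n i = (i - 1) mod n + 1"

definition H1 :: "nat \<Rightarrow> (nat \<Rightarrow> real) \<Rightarrow> real \<Rightarrow> (nat \<Rightarrow> real) \<Rightarrow> nat \<Rightarrow> nat \<Rightarrow> real" where
  "H1 n uhj \<rho> s i j =
    (let a = bnum n i; b = bnum n j; p = bpos n i; q = bpos n j in
     if a = 0 \<and> b = 0 then 0
     else if a = 0 \<and> (b = 1 \<or> b = 2) then - \<rho> / 2
     else if (a = 1 \<or> a = 2) \<and> b = 0 then - \<rho> / 2
     else if a = 0 \<and> b = 3 then (uhj q - s q) / 2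
     else if a = 3 \<and> b = 0 then (uhj p - s p) / 2
     else if (a = 1 \<and> b = 3) \<or> (a = 3 \<and> b = 1) then (if p = q then 1/2 else 0)
     else if (a = 2 \<and> b = 3) \<or> (a = 3 \<and> b = 2) then (if p = q then - 1/2 else 0)
     else 0)"

definition H2 :: "nat \<Rightarrow> (nat \<Rightarrow> real) \<Rightarrow> real \<Rightarrow> (nat \<Rightarrow> real) \<Rightarrow> nat \<Rightarrow> nat \<Rightarrow> real" where
  "H2 n uhj \<rho> s i j =
    (let a = bnum n i; b = bnum n j; p = bpos n i; q = bpos n j in
     if a = 0 \<and> b = 0 then - \<rho> * (\<Sum>k=1..n. (uhj k)\<^sup>2)
     else if a = 0 \<and> b = 1 then \<rho> * uhj q
     else if a = 1 \<and> b = 0 then \<rho> * uhj p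
     else if a = 0 \<and> b = 2 then - s q / 2
     else if a = 2 \<and> b = 0 then - s p / 2
     else if a = 1 \<and> b = 1 then (if p = q then - \<rho> else 0)
     else if (a = 1 \<and> b = 2) \<or> (a = 2 \<and> b = 1) then (if p = q then 1/2 else 0)
     else 0)"

definition shiftM :: "real \<Rightarrow> (nat \<Rightarrow> nat \<Rightarrow> real) \<Rightarrow> nat \<Rightarrow> nat \<Rightarrow> real" where
  "shiftM \<beta> H = (\<lambda>i j. (if i = 0 \<and> j = 0 then \<beta> else 0) - H i j)"

definition prog1_feas :: "nat \<Rightarrow> real \<Rightarrow> (nat \<Rightarrow> real) \<Rightarrow> (nat \<Rightarrow> real) \<Rightarrow> real \<Rightarrow> (nat \<Rightarrow> real) set \<Rightarrow> nat \<Rightarrow> (nat \<Rightarrow> nat \<Rightarrow> real)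
     \<Rightarrow> real \<Rightarrow> (nat \<Rightarrow> real) \<Rightarrow> (nat \<Rightarrow> real) \<Rightarrow> bool" where
  "prog1_feas n T c d C U N uh \<rho> \<beta> s \<longleftrightarrow> s \<in> sched n T \<and> 0 \<le> \<rho> \<and>
     (\<forall>j\<in>{1..N}. shiftM (\<beta> j) (H1 n (uh j) \<rho> s) \<in> COP (3*n+1) (K1 n c d C U (uh j)))"

definition prog1_obj :: "nat \<Rightarrow> real \<Rightarrow> real \<Rightarrow> (nat \<Rightarrow> real) \<Rightarrow> real" where
  "prog1_obj N eps \<rho> \<beta> = eps * \<rho> + (1 / real N) * (\<Sum>j=1..N. \<beta> j)"

definition prog1_val where
  "prog1_val n T c d C U N uh eps =
     Inf {ereal (prog1_obj N eps \<rho> \<beta>) | \<rho> \<beta> s. prog1_feas n T c d C U N uh \<rho> \<beta> s}"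

definition prog1_opt where
  "prog1_opt n T c d C U N uh eps = {s. \<exists>\<rho> \<beta>. prog1_feas n T c d C U N uh \<rho> \<beta> s \<and>
       ereal (prog1_obj N eps \<rho> \<beta>) = prog1_val n T c d C U N uh eps}"

definition prog2_feas :: "nat \<Rightarrow> real \<Rightarrow> (nat \<Rightarrow> real) \<Rightarrow> (nat \<Rightarrow> real) \<Rightarrow> real \<Rightarrow> (nat \<Rightarrow> real) set \<Rightarrow> nat \<Rightarrow> (nat \<Rightarrow> nat \<Rightarrow> real)
     \<Rightarrow> real \<Rightarrow> (nat \<Rightarrow> real) \<Rightarrow> (nat \<Rightarrow> real) \<Rightarrow> bool" where
  "prog2_feas n T c d C U N uh \<rho> \<beta> s \<longleftrightarrow> s \<in> sched n T \<and> 0 \<le> \<rho> \<and>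
     (\<forall>j\<in>{1..N}. shiftM (\<beta> j) (H2 n (uh j) \<rho> s) \<in> COP (2*n+1) (K2 n c d C U))"

definition prog2_obj :: "nat \<Rightarrow> real \<Rightarrow> real \<Rightarrow> (nat \<Rightarrow> real) \<Rightarrow> real" where
  "prog2_obj N eps \<rho> \<beta> = eps\<^sup>2 * \<rho> + (1 / real N) * (\<Sum>j=1..N. \<beta> j)"

definition prog2_val where
  "prog2_val n T c d C U N uh eps =
     Inf {ereal (prog2_obj N eps \<rho> \<beta>) | \<rho> \<beta> s. prog2_feas n T c d C U N uh \<rho> \<beta> s}"

definition prog2_opt where
  "prog2_opt n T c d C U N uh eps = {s. \<exists>\<rho> \<beta>. prog2_feas n T c d C U N uh \<rho> \<beta> s \<and>
       ereal (prog2_obj N eps \<rho> \<beta>) = prog2_val n T c d C U N uh eps}"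

end

theory Submission
  imports Defs
begin

text \<open>For fixed \<open>s\<close> the recourse LP is solved in closed form: the greedy waiting and idle
  times are optimal, certified by a dual price vector in \<open>Y\<close> built backwards from the last
  appointment, so that \<open>f(s,u) = max {(u - s) \<cdot> y | y \<in> Y}\<close>.
  Over the Wasserstein ball the worst-case expectation of a continuous cost \<open>g\<close> equals the
  minimum over \<open>\<rho> \<ge> 0\<close> of \<open>\<epsilon>\<^sup>p \<rho> + (1/N) \<Sum>\<^sub>j sup {g u - \<rho> \<parallel>u - \<^bold>u\<^sub>j\<parallel>\<^sub>p\<^sup>p | u \<in> U}\<close>:
  integrating the pointwise bound against a coupling gives \<open>\<le>\<close>, and mixtures of the maximizers
  at \<open>\<rho>\<^sup>* \<plusminus> \<delta>\<close> that exhaust the transport budget come arbitrarily close.  With epigraph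
  variables \<open>\<beta>\<^sub>j\<close> the dual becomes a semi-infinite program whose constraints, read as quadratic
  inequalities in \<open>(u, y)\<close> (for \<open>p = 1\<close> after splitting \<open>u - \<^bold>u\<^sub>j\<close> into positive and
  negative parts), are exactly copositivity of \<open>\<beta>\<^sub>j e\<^sub>1 e\<^sub>1\<^sup>T - H\<^sub>j\<close> on the perspective cones.\<close>

section \<open>The recourse problem in closed form\<close>

text \<open>Lindley's recursion \<open>w\<^sub>1 = 0\<close>, \<open>w\<^sub>k\<^sub>+\<^sub>1 = max 0 (w\<^sub>k + u\<^sub>k - s\<^sub>k)\<close>; index \<open>0\<close> is unused.\<close>

fun wait_time :: "(nat \<Rightarrow> real) \<Rightarrow> (nat \<Rightarrow> real) \<Rightarrow> nat \<Rightarrow> real" where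
  "wait_time s u 0 = 0"
| "wait_time s u (Suc k) = (if k = 0 then 0 else max 0 (wait_time s u k + u k - s k))"

definition idle_time :: "(nat \<Rightarrow> real) \<Rightarrow> (nat \<Rightarrow> real) \<Rightarrow> nat \<Rightarrow> real" where
  "idle_time s u k = max 0 (- (wait_time s u k + u k - s k))"

definition greedy_cost :: "nat \<Rightarrow> (nat \<Rightarrow> real) \<Rightarrow> (nat \<Rightarrow> real) \<Rightarrow> real \<Rightarrow> (nat \<Rightarrow> real) \<Rightarrow> (nat \<Rightarrow> real) \<Rightarrow> real" where
  "greedy_cost n c d C s u =
     (\<Sum>i=1..n. c i * wait_time s u i + d i * idle_time s u i) + C * wait_time s u (n+1)"

text \<open>The dual solution is built backwards from the last appointment:
  \<open>backward_price \<dots> m\<close> is the price of appointment \<open>n - m\<close>.\<close>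

fun backward_price :: "nat \<Rightarrow> (nat \<Rightarrow> real) \<Rightarrow> (nat \<Rightarrow> real) \<Rightarrow> real \<Rightarrow> (nat \<Rightarrow> real) \<Rightarrow> (nat \<Rightarrow> real) \<Rightarrow> nat \<Rightarrow> real" where
  "backward_price n c d C s u 0 = (if 0 < wait_time s u (n+1) then C else - d n)"
| "backward_price n c d C s u (Suc m) =
     (if 0 < wait_time s u (n-m) then backward_price n c d C s u m + c (n-m) else - d (n-m-1))"

definition dual_price :: "nat \<Rightarrow> (nat \<Rightarrow> real) \<Rightarrow> (nat \<Rightarrow> real) \<Rightarrow> real \<Rightarrow> (nat \<Rightarrow> real) \<Rightarrow> (nat \<Rightarrow> real) \<Rightarrow> nat \<Rightarrow> real" where
  "dual_price n c d C s u k = (if 1 \<le> k \<and> k \<le> n then backward_price n c d C s u (n - k) else 0)"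

lemma wait_time_nonneg: "0 \<le> wait_time s u k"
  by (cases k) auto

lemma idle_time_nonneg: "0 \<le> idle_time s u k"
  by (simp add: idle_time_def)

lemma wait_idle_balance: "1 \<le> k \<Longrightarrow> wait_time s u (k+1) - idle_time s u k = u k + wait_time s u k - s k"
  by (simp add: idle_time_def)

lemma wait_time_zero_if_idle: "1 \<le> k \<Longrightarrow> 0 < idle_time s u k \<Longrightarrow> wait_time s u (k+1) = 0"
  by (simp add: idle_time_def)

lemma lp_feasible_greedy: "lp_feasible n s u (wait_time s u) (idle_time s u)"
  unfolding lp_feasible_def
proof (intro conjI ballI)
  fix i assume "i \<in> {2..n+1}"
  then obtain k where k: "i = Suc k" "1 \<le> k" by (cases i) auto
  show "wait_time s u i - idle_time s u (i-1) = u (i-1) + wait_time s u (i-1) - s (i-1)"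
    using wait_idle_balance[OF k(2), of s u] k(1) by simp
qed (auto simp: wait_time_nonneg idle_time_nonneg)

lemma lp_feasible_balance:
  assumes "lp_feasible n s u w v" "k \<in> {1..n}"
  shows "u k - s k = w (k+1) - w k - v k"
  using assms unfolding lp_feasible_def by (auto dest!: bspec[where x="k+1"])

lemma sum_atLeast1_by_parts:
  fixes y a :: "nat \<Rightarrow> 'a::comm_ring"
  assumes "1 \<le> m"
  shows "(\<Sum>k=1..m. y k * (a (k+1) - a k)) =
         y m * a (m+1) - y 1 * a 1 + (\<Sum>k=2..m. (y (k-1) - y k) * a k)"
  using assms
proof (induction m rule: dec_induct)
  case (step m)
  moreover have "{2..Suc m} = insert (Suc m) {2..m}" "Suc m \<notin> {2..m}"
    using step(1) by auto
  ultimately show ?case by (simp add: algebra_simps)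
qed (simp add: algebra_simps)

text \<open>The common core of weak duality and complementary slackness: after summation by parts
  the dual objective can be compared termwise with the LP objective.\<close>

lemma dual_objective_by_parts:
  assumes "1 \<le> n" and "lp_feasible n s u w v"
  shows "(\<Sum>k=1..n. (u k - s k) * y k) =
         y n * w (n+1) + (\<Sum>k=2..n. (y (k-1) - y k) * w k) - (\<Sum>k=1..n. y k * v k)"
proof -
  have "(\<Sum>k=1..n. (u k - s k) * y k) = (\<Sum>k=1..n. y k * (w (k+1) - w k) - y k * v k)"
  proof (rule sum.cong)
    fix k assume "k \<in> {1..n}"
    then have "(u k - s k) * y k = (w (k+1) - w k - v k) * y k"
      by (simp only: lp_feasible_balance[OF assms(2)])
    then show "(u k - s k) * y k = y k * (w (k+1) - w k) - y k * v k"
      by (simp add: algebra_simps)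
  qed simp
  also have "\<dots> = (\<Sum>k=1..n. y k * (w (k+1) - w k)) - (\<Sum>k=1..n. y k * v k)"
    by (simp add: sum_subtractf)
  finally show ?thesis
    using sum_atLeast1_by_parts[OF assms(1), of y w] assms(2) by (simp add: lp_feasible_def)
qed

lemma lp_objective_split:
  fixes n :: nat and c d w v :: "nat \<Rightarrow> real"
  assumes "1 \<le> n" and "w 1 = 0"
  shows "(\<Sum>i=1..n. c i * w i + d i * v i) + C * w (n+1) =
         C * w (n+1) + (\<Sum>k=2..n. c k * w k) + (\<Sum>k=1..n. d k * v k)"
proof -
  have "{1..n} = insert 1 {2..n}" using assms(1) by auto
  then have "(\<Sum>i=1..n. c i * w i) = (\<Sum>k=2..n. c k * w k)" using assms(2) by simp
  then show ?thesis by (simp add: sum.distrib)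
qed

lemma lp_weak_duality:
  assumes n: "1 \<le> n" and feas: "lp_feasible n s u w v" and y: "y \<in> Yset n c d C"
  shows "(\<Sum>k=1..n. (u k - s k) * y k) \<le> (\<Sum>i=1..n. c i * w i + d i * v i) + C * w (n+1)"
proof -
  have w_nonneg: "0 \<le> w k" if "k \<in> {1..n+1}" for k
    using feas that by (simp add: lp_feasible_def)
  have v_nonneg: "0 \<le> v k" if "k \<in> {1..n}" for k
    using feas that by (simp add: lp_feasible_def)
  have "y n * w (n+1) \<le> C * w (n+1)"
    using y w_nonneg[of "n+1"] by (intro mult_right_mono) (auto simp: Yset_def)
  moreover have "(\<Sum>k=2..n. (y (k-1) - y k) * w k) \<le> (\<Sum>k=2..n. c k * w k)"
    using y w_nonneg by (intro sum_mono mult_right_mono) (auto simp: Yset_def)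
  moreover have "(\<Sum>k=1..n. - y k * v k) \<le> (\<Sum>k=1..n. d k * v k)"
    using y v_nonneg by (intro sum_mono mult_right_mono) (auto simp: Yset_def)
  moreover have "(\<Sum>i=1..n. c i * w i + d i * v i) + C * w (n+1) =
      C * w (n+1) + (\<Sum>k=2..n. c k * w k) + (\<Sum>k=1..n. d k * v k)"
    using feas by (intro lp_objective_split[OF n]) (simp add: lp_feasible_def)
  ultimately show ?thesis
    unfolding dual_objective_by_parts[OF n feas] by (simp add: sum_negf)
qed

lemma continuous_on_coordinate: "continuous_on A (\<lambda>x::nat \<Rightarrow> real. x i)"
  by (rule continuous_on_subset[OF continuous_on_product_coordinates]) simp

lemma continuous_on_wait_time: "continuous_on A (\<lambda>u. wait_time s u k)"
proof (induction k)
  case (Suc k)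
  then show ?case by (cases "k = 0") (auto intro!: continuous_intros continuous_on_coordinate)
qed simp

lemma continuous_on_greedy_cost: "continuous_on A (greedy_cost n c d C s)"
  unfolding greedy_cost_def idle_time_def
  by (intro continuous_intros continuous_on_wait_time continuous_on_coordinate)

locale recourse_costs =
  fixes n :: nat and c d :: "nat \<Rightarrow> real" and C :: real
  assumes n: "1 \<le> n"
    and c_nonneg: "\<forall>i\<in>{1..n}. 0 \<le> c i" and d_nonneg: "\<forall>i\<in>{1..n}. 0 \<le> d i" and C_nonneg: "0 \<le> C"
    and d_increment: "\<forall>i\<in>{1..n-1}. d (i+1) - d i \<le> c (i+1)"
begin

lemma backward_price_lower: "m < n \<Longrightarrow> - d (n-m) \<le> backward_price n c d C s u m"
proof (induction m)
  case 0
  have "0 \<le> d n" using d_nonneg n by auto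
  then show ?case using C_nonneg by simp
next
  case (Suc m)
  have IH: "- d (n-m) \<le> backward_price n c d C s u m" using Suc by simp
  have "d (n-m) - d (n-m-1) \<le> c (n-m)"
    using d_increment Suc.prems by (auto dest!: bspec[where x="n-m-1"] simp: Suc_diff_Suc)
  with IH show ?case by (auto simp: Suc_diff_Suc[symmetric])
qed

lemma dual_price_in_Yset: "dual_price n c d C s u \<in> Yset n c d C"
  unfolding Yset_def
proof (intro CollectI conjI ballI)
  show "dual_price n c d C s u \<in> vecs n" unfolding vecs_def dual_price_def by auto
next
  fix i assume "i \<in> {1..n}"
  then show "- dual_price n c d C s u i \<le> d i"
    using backward_price_lower[of "n-i" s u] by (simp add: dual_price_def)
next
  fix i assume i: "i \<in> {2..n}"
  then have "n - (i-1) = Suc (n-i)" "n - (n-i) = i" "n - (n-i) - 1 = i - 1" by auto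
  moreover have "- d i \<le> backward_price n c d C s u (n-i)"
    using backward_price_lower[of "n-i" s u] i by simp
  moreover have "d i - d (i-1) \<le> c i"
    using d_increment i by (auto dest!: bspec[where x="i-1"])
  moreover have "0 \<le> c i" using c_nonneg i by auto
  ultimately show "dual_price n c d C s u (i-1) - dual_price n c d C s u i \<le> c i"
    using i by (auto simp: dual_price_def)
next
  have "0 \<le> d n" using n d_nonneg by auto
  then show "dual_price n c d C s u n \<le> C"
    using n C_nonneg by (auto simp: dual_price_def)
qed

text \<open>Complementary slackness: each price constraint of \<open>Yset\<close> is tight wherever
  the greedy schedule has positive waiting or idle time.\<close>

lemma greedy_cost_eq_dual: "(\<Sum>k=1..n. (u k - s k) * dual_price n c d C s u k) = greedy_cost n c d C s u"
proof -
  let ?y = "dual_price n c d C s u" and ?w = "wait_time s u" and ?v = "idle_time s u"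
  have last: "?y n * ?w (n+1) = C * ?w (n+1)"
    using n wait_time_nonneg[of s u "n+1"] by (auto simp: dual_price_def)
  have wait: "(?y (k-1) - ?y k) * ?w k = c k * ?w k" if k: "k \<in> {2..n}" for k
  proof -
    have "n - (k-1) = Suc (n-k)" "n - (n-k) = k" using k by auto
    then show ?thesis using k wait_time_nonneg[of s u k] by (auto simp: dual_price_def)
  qed
  have idle: "?y k * ?v k = - d k * ?v k" if k: "k \<in> {1..n}" for k
  proof (cases "0 < ?v k")
    case True
    then have w0: "?w (k+1) = 0" using wait_time_zero_if_idle k by auto
    show ?thesis
    proof (cases "k = n")
      case False
      then have "n - k = Suc (n-k-1)" "n - (n-k-1) = k+1" "n - (n-k-1) - 1 = k" using k by auto
      then show ?thesis using k w0 by (simp add: dual_price_def)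
    qed (use w0 k in \<open>simp add: dual_price_def\<close>)
  qed (use idle_time_nonneg[of s u k] in simp)
  have "(\<Sum>k=2..n. (?y (k-1) - ?y k) * ?w k) = (\<Sum>k=2..n. c k * ?w k)"
    using wait by (intro sum.cong) auto
  moreover have "(\<Sum>k=1..n. ?y k * ?v k) = - (\<Sum>k=1..n. d k * ?v k)"
    unfolding sum_negf[symmetric] by (rule sum.cong) (simp_all add: idle)
  moreover have "greedy_cost n c d C s u =
      C * ?w (n+1) + (\<Sum>k=2..n. c k * ?w k) + (\<Sum>k=1..n. d k * ?v k)"
    unfolding greedy_cost_def by (rule lp_objective_split[OF n]) simp
  ultimately show ?thesis
    unfolding dual_objective_by_parts[OF n lp_feasible_greedy] last by linarith
qed

lemma greedy_cost_ge_dual: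
  "y \<in> Yset n c d C \<Longrightarrow> (\<Sum>k=1..n. (u k - s k) * y k) \<le> greedy_cost n c d C s u"
  using lp_weak_duality[OF n lp_feasible_greedy] unfolding greedy_cost_def .

lemma recourse_eq_greedy_cost: "recourse n c d C s u = greedy_cost n c d C s u"
  unfolding recourse_def
proof (rule cInf_eq_minimum)
  show "greedy_cost n c d C s u \<in>
      {(\<Sum>i=1..n. c i * w i + d i * v i) + C * w (n+1) |w v. lp_feasible n s u w v}"
    using lp_feasible_greedy[of n s u] unfolding greedy_cost_def by blast
next
  fix x assume "x \<in> {(\<Sum>i=1..n. c i * w i + d i * v i) + C * w (n+1) |w v. lp_feasible n s u w v}"
  then obtain w v where x: "x = (\<Sum>i=1..n. c i * w i + d i * v i) + C * w (n+1)"
    and feas: "lp_feasible n s u w v" by blast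
  have "greedy_cost n c d C s u = (\<Sum>k=1..n. (u k - s k) * dual_price n c d C s u k)"
    by (rule greedy_cost_eq_dual[symmetric])
  also have "\<dots> \<le> x"
    unfolding x by (rule lp_weak_duality[OF n feas dual_price_in_Yset])
  finally show "greedy_cost n c d C s u \<le> x" .
qed

end

section \<open>Copositive form of the semi-infinite constraints\<close>

definition quad_form :: "nat \<Rightarrow> (nat \<Rightarrow> nat \<Rightarrow> real) \<Rightarrow> (nat \<Rightarrow> real) \<Rightarrow> real" where
  "quad_form k M x = (\<Sum>i<k. \<Sum>j<k. x i * M i j * x j)"

lemma COP_iff_quad_form:
  "M \<in> COP k K \<longleftrightarrow> (\<forall>i<k. \<forall>j<k. M i j = M j i) \<and> (\<forall>x\<in>K. 0 \<le> quad_form k M x)"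
  by (simp add: COP_def quad_form_def)

lemma quad_form_scale: "quad_form k M (\<lambda>i. t * x i) = t\<^sup>2 * quad_form k M x"
  unfolding quad_form_def sum_distrib_left by (simp add: power2_eq_square ac_simps)

lemma continuous_on_quad_form: "continuous_on A (quad_form k M)"
  unfolding quad_form_def by (intro continuous_intros continuous_on_coordinate)

text \<open>Copositivity over the closed perspective cone of a set only has to be checked
  on the slice \<open>x 0 = 1\<close>, where the cone coincides with the set itself.\<close>

lemma COP_perspective_iff:
  assumes sym: "\<forall>i<k. \<forall>j<k. M i j = M j i"
  shows "M \<in> COP k (closure {x \<in> vecs0 k. 0 < x 0 \<and> P (\<lambda>i. x i / x 0)}) \<longleftrightarrow>
         (\<forall>x\<in>vecs0 k. x 0 = 1 \<longrightarrow> P x \<longrightarrow> 0 \<le> quad_form k M x)"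
    (is "M \<in> COP k (closure ?S) \<longleftrightarrow> ?slice")
proof
  assume cop: "M \<in> COP k (closure ?S)"
  show ?slice
  proof (intro ballI impI)
    fix x assume "x \<in> vecs0 k" "x 0 = 1" "P x"
    then have "x \<in> ?S" by simp
    then have "x \<in> closure ?S" by (rule closure_subset[THEN subsetD])
    with cop show "0 \<le> quad_form k M x" unfolding COP_iff_quad_form by blast
  qed
next
  assume slice: ?slice
  have nonneg: "0 \<le> quad_form k M x" if x: "x \<in> ?S" for x
  proof -
    define y where "y = (\<lambda>i. x i / x 0)"
    have "y \<in> vecs0 k" "y 0 = 1" "P y" using x by (auto simp: vecs0_def y_def)
    then have "0 \<le> quad_form k M y" using slice by blast
    have "x = (\<lambda>i. x 0 * y i)" using x by (simp add: y_def)
    then have "quad_form k M x = (x 0)\<^sup>2 * quad_form k M y"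
      using quad_form_scale[of k M "x 0" y] by simp
    with \<open>0 \<le> quad_form k M y\<close> show ?thesis by simp
  qed
  have "closed {x. 0 \<le> quad_form k M x}"
    by (rule closed_Collect_le[OF continuous_on_const continuous_on_quad_form])
  with nonneg have "closure ?S \<subseteq> {x. 0 \<le> quad_form k M x}"
    by (intro closure_minimal) auto
  with sym show "M \<in> COP k (closure ?S)"
    unfolding COP_iff_quad_form by blast
qed

lemma sum_lessThan_add:
  fixes g :: "nat \<Rightarrow> 'a::comm_monoid_add"
  shows "(\<Sum>i<m+l. g i) = (\<Sum>i<m. g i) + (\<Sum>k<l. g (m+k))"
  by (induction l) (auto simp: add.assoc)

lemma sum_lessThan_blocks:
  fixes g :: "nat \<Rightarrow> 'a::comm_monoid_add"
  shows "(\<Sum>i<m*n+1. g i) = g 0 + (\<Sum>b<m. \<Sum>k=1..n. g (b*n+k))"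
proof (induction m)
  case (Suc m)
  have "(\<Sum>i<Suc m*n+1. g i) = (\<Sum>i<m*n+1. g i) + (\<Sum>k<n. g (m*n+1+k))"
    unfolding sum_lessThan_add[symmetric] by (simp add: add_ac)
  also have "(\<Sum>k<n. g (m*n+1+k)) = (\<Sum>k=1..n. g (m*n+k))"
    by (simp add: sum.atLeast1_atMost_eq)
  also have "(\<Sum>i<m*n+1. g i) = g 0 + (\<Sum>b<m. \<Sum>k=1..n. g (b*n+k))"
    by (rule Suc.IH)
  also have "g 0 + (\<Sum>b<m. \<Sum>k=1..n. g (b*n+k)) + (\<Sum>k=1..n. g (m*n+k)) =
      g 0 + (\<Sum>b<Suc m. \<Sum>k=1..n. g (b*n+k))"
    by (simp add: add.assoc)
  finally show ?case .
qed simp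

lemma sum_lessThan_3_blocks:
  fixes g :: "nat \<Rightarrow> 'a::comm_monoid_add"
  shows "(\<Sum>i<3*n+1. g i) = g 0 + (\<Sum>k=1..n. g k) + (\<Sum>k=1..n. g (n+k)) + (\<Sum>k=1..n. g (2*n+k))"
  unfolding sum_lessThan_blocks by (simp add: numeral_3_eq_3 numeral_2_eq_2 add.assoc)

lemma sum_lessThan_2_blocks:
  fixes g :: "nat \<Rightarrow> 'a::comm_monoid_add"
  shows "(\<Sum>i<2*n+1. g i) = g 0 + (\<Sum>k=1..n. g k) + (\<Sum>k=1..n. g (n+k))"
  unfolding sum_lessThan_blocks by (simp add: numeral_2_eq_2 add.assoc)
lemma bnum_bpos_block:
  assumes "k \<in> {1..n}"
  shows "bnum n (b*n+k) = b+1" "bpos n (b*n+k) = k"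
proof -
  have e: "b*n+k-1 = (k-1) + b*n" and l: "k - 1 < n" and n: "n \<noteq> 0" using assms by auto
  have "(b*n+k-1) div n = b" unfolding e using l n by simp
  moreover have "(b*n+k-1) mod n = k - 1" unfolding e using l n by simp
  ultimately show "bnum n (b*n+k) = b+1" "bpos n (b*n+k) = k" using assms
    by (auto simp: bnum_def bpos_def)
qed

lemma bnum_bpos_blocks:
  assumes "k \<in> {1..n}"
  shows "bnum n 0 = 0" "bnum n k = 1" "bpos n k = k" "bnum n (n+k) = 2" "bpos n (n+k) = k"
    "bnum n (2*n+k) = 3" "bpos n (2*n+k) = k"
  using bnum_bpos_block[OF assms, of 0] bnum_bpos_block[OF assms, of 1]
    bnum_bpos_block[OF assms, of 2]
  by (simp_all add: bnum_def)

lemma sum_delta_left: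
  fixes f :: "'a \<Rightarrow> 'b::semiring_0"
  assumes "finite A" "p \<in> A"
  shows "(\<Sum>q\<in>A. (if p = q then a else 0) * f q) = a * f p"
proof -
  have "(\<Sum>q\<in>A - {p}. (if p = q then a else 0) * f q) = 0" by (rule sum.neutral) auto
  then show ?thesis using sum.remove[OF assms, of "\<lambda>q. (if p = q then a else 0) * f q"] by simp
qed

lemma quad_form_shiftM:
  assumes "0 < k"
  shows "quad_form k (shiftM \<beta> H) x = \<beta> * (x 0)\<^sup>2 - (\<Sum>i<k. x i * (\<Sum>j<k. H i j * x j))"
proof -
  have entry: "x i * shiftM \<beta> H i j * x j =
      (if i = 0 \<and> j = 0 then \<beta> * (x 0)\<^sup>2 else 0) - x i * (H i j * x j)" for i j
    by (simp add: shiftM_def algebra_simps power2_eq_square)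
  have "quad_form k (shiftM \<beta> H) x =
      (\<Sum>i<k. \<Sum>j<k. (if i = 0 \<and> j = 0 then \<beta> * (x 0)\<^sup>2 else 0)) - (\<Sum>i<k. x i * (\<Sum>j<k. H i j * x j))"
    unfolding quad_form_def entry by (simp add: sum_subtractf sum_distrib_left)
  also have "(\<Sum>i<k. \<Sum>j<k. (if i = 0 \<and> j = 0 then \<beta> * (x 0)\<^sup>2 else 0)) = \<beta> * (x 0)\<^sup>2"
  proof -
    have "(\<Sum>j<k. (if i = 0 \<and> j = 0 then \<beta> * (x 0)\<^sup>2 else 0)) = (if i = 0 then \<beta> * (x 0)\<^sup>2 else 0)"
      for i using assms by (cases "i = 0") simp_all
    then have "(\<Sum>i<k. \<Sum>j<k. (if i = 0 \<and> j = 0 then \<beta> * (x 0)\<^sup>2 else 0)) =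
        (\<Sum>i<k. if i = 0 then \<beta> * (x 0)\<^sup>2 else 0)"
      by (rule sum.cong[OF refl])
    also have "\<dots> = \<beta> * (x 0)\<^sup>2" using assms by simp
    finally show ?thesis .
  qed
  finally show ?thesis .
qed

lemma shiftM_sym: "(\<And>i j. H i j = H j i) \<Longrightarrow> shiftM \<beta> H i j = shiftM \<beta> H j i"
  by (auto simp: shiftM_def)

context
  fixes n :: nat and uhj s :: "nat \<Rightarrow> real" and \<rho> :: real
begin

lemma H1_sym: "H1 n uhj \<rho> s i j = H1 n uhj \<rho> s j i"
  unfolding H1_def Let_def
  by (cases "bnum n i = 0"; cases "bnum n j = 0"; cases "bnum n i = 1"; cases "bnum n j = 1";
      cases "bnum n i = 2"; cases "bnum n j = 2"; cases "bnum n i = 3"; cases "bnum n j = 3"; simp)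

lemma H1_corner: "H1 n uhj \<rho> s 0 0 = 0"
  by (simp add: H1_def Let_def bnum_def)

lemma H1_border_entries:
  assumes k: "k \<in> {1..n}"
  shows "H1 n uhj \<rho> s 0 k = - \<rho> / 2" "H1 n uhj \<rho> s 0 (n+k) = - \<rho> / 2"
    "H1 n uhj \<rho> s 0 (2*n+k) = (uhj k - s k) / 2"
    "H1 n uhj \<rho> s k 0 = - \<rho> / 2" "H1 n uhj \<rho> s (n+k) 0 = - \<rho> / 2"
    "H1 n uhj \<rho> s (2*n+k) 0 = (uhj k - s k) / 2"
  using bnum_bpos_blocks[OF k] by (simp_all add: H1_def Let_def)

lemma H1_inner_entries:
  assumes p: "p \<in> {1..n}" and q: "q \<in> {1..n}"
  shows "H1 n uhj \<rho> s p q = 0" "H1 n uhj \<rho> s p (n+q) = 0"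
    "H1 n uhj \<rho> s p (2*n+q) = (if p = q then 1/2 else 0)"
    "H1 n uhj \<rho> s (n+p) q = 0" "H1 n uhj \<rho> s (n+p) (n+q) = 0"
    "H1 n uhj \<rho> s (n+p) (2*n+q) = (if p = q then - 1/2 else 0)"
    "H1 n uhj \<rho> s (2*n+p) q = (if p = q then 1/2 else 0)"
    "H1 n uhj \<rho> s (2*n+p) (n+q) = (if p = q then - 1/2 else 0)"
    "H1 n uhj \<rho> s (2*n+p) (2*n+q) = 0"
  using bnum_bpos_blocks[OF p] bnum_bpos_blocks[OF q] by (simp_all add: H1_def Let_def)

lemma H1_first_row_sum:
  "(\<Sum>j<3*n+1. H1 n uhj \<rho> s 0 j * x j) = - \<rho> / 2 * (\<Sum>q=1..n. x q)
     - \<rho> / 2 * (\<Sum>q=1..n. x (n+q)) + (\<Sum>q=1..n. (uhj q - s q) / 2 * x (2*n+q))"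
  unfolding sum_lessThan_3_blocks
  by (simp add: H1_corner H1_border_entries sum_distrib_left sum_negf sum_divide_distrib)

lemma H1_row_sums:
  assumes p: "p \<in> {1..n}"
  shows "(\<Sum>j<3*n+1. H1 n uhj \<rho> s p j * x j) = - \<rho> / 2 * x 0 + 1/2 * x (2*n+p)"
    "(\<Sum>j<3*n+1. H1 n uhj \<rho> s (n+p) j * x j) = - \<rho> / 2 * x 0 - 1/2 * x (2*n+p)"
    "(\<Sum>j<3*n+1. H1 n uhj \<rho> s (2*n+p) j * x j) =
       (uhj p - s p) / 2 * x 0 + 1/2 * x p - 1/2 * x (n+p)"
  using sum_delta_left[OF _ p, of "1/2" "\<lambda>q. x (2*n+q)"]
    sum_delta_left[OF _ p, of "- 1/2" "\<lambda>q. x (2*n+q)"]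
    sum_delta_left[OF _ p, of "1/2" x] sum_delta_left[OF _ p, of "- 1/2" "\<lambda>q. x (n+q)"]
  unfolding sum_lessThan_3_blocks
  by (simp_all add: H1_inner_entries[OF p] H1_border_entries[OF p])

lemma quad_form_H1:
  "quad_form (3*n+1) (shiftM \<beta> (H1 n uhj \<rho> s)) x = \<beta> * (x 0)\<^sup>2 -
     (x 0 * (\<Sum>k=1..n. (uhj k - s k) * x (2*n+k)) + (\<Sum>k=1..n. (x k - x (n+k)) * x (2*n+k))
      - \<rho> * x 0 * (\<Sum>k=1..n. x k + x (n+k)))"
proof -
  have "quad_form (3*n+1) (shiftM \<beta> (H1 n uhj \<rho> s)) x =
      \<beta> * (x 0)\<^sup>2 - (\<Sum>i<3*n+1. x i * (\<Sum>j<3*n+1. H1 n uhj \<rho> s i j * x j))"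
    by (rule quad_form_shiftM) simp
  also have "(\<Sum>i<3*n+1. x i * (\<Sum>j<3*n+1. H1 n uhj \<rho> s i j * x j)) =
     x 0 * (- \<rho> / 2 * (\<Sum>q=1..n. x q) - \<rho> / 2 * (\<Sum>q=1..n. x (n+q))
       + (\<Sum>q=1..n. (uhj q - s q) / 2 * x (2*n+q)))
     + (\<Sum>p=1..n. x p * (- \<rho> / 2 * x 0 + 1/2 * x (2*n+p)))
     + (\<Sum>p=1..n. x (n+p) * (- \<rho> / 2 * x 0 - 1/2 * x (2*n+p)))
     + (\<Sum>p=1..n. x (2*n+p) * ((uhj p - s p) / 2 * x 0 + 1/2 * x p - 1/2 * x (n+p)))"
  proof -
    have a: "(\<Sum>p=1..n. x p * (\<Sum>j<3*n+1. H1 n uhj \<rho> s p j * x j)) =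
        (\<Sum>p=1..n. x p * (- \<rho> / 2 * x 0 + 1/2 * x (2*n+p)))"
      by (rule sum.cong[OF refl]) (subst H1_row_sums(1), auto)
    have b: "(\<Sum>p=1..n. x (n+p) * (\<Sum>j<3*n+1. H1 n uhj \<rho> s (n+p) j * x j)) =
        (\<Sum>p=1..n. x (n+p) * (- \<rho> / 2 * x 0 - 1/2 * x (2*n+p)))"
      by (rule sum.cong[OF refl]) (subst H1_row_sums(2), auto)
    have c: "(\<Sum>p=1..n. x (2*n+p) * (\<Sum>j<3*n+1. H1 n uhj \<rho> s (2*n+p) j * x j)) =
        (\<Sum>p=1..n. x (2*n+p) * ((uhj p - s p) / 2 * x 0 + 1/2 * x p - 1/2 * x (n+p)))"
      by (rule sum.cong[OF refl]) (subst H1_row_sums(3), auto)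
    show ?thesis
      unfolding sum_lessThan_3_blocks[of "\<lambda>i. x i * (\<Sum>j<3*n+1. H1 n uhj \<rho> s i j * x j)"]
        a b c H1_first_row_sum ..
  qed
  also have "\<dots> = x 0 * (\<Sum>k=1..n. (uhj k - s k) * x (2*n+k)) + (\<Sum>k=1..n. (x k - x (n+k)) * x (2*n+k))
      - \<rho> * x 0 * (\<Sum>k=1..n. x k + x (n+k))"
    by (simp only: sum_distrib_left sum.distrib[symmetric] sum_subtractf[symmetric])
       (rule sum.cong[OF refl], simp add: algebra_simps)
  finally show ?thesis .
qed

lemma H2_sym: "H2 n uhj \<rho> s i j = H2 n uhj \<rho> s j i"
  unfolding H2_def Let_def
  by (cases "bnum n i = 0"; cases "bnum n j = 0"; cases "bnum n i = 1"; cases "bnum n j = 1";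
      cases "bnum n i = 2"; cases "bnum n j = 2"; simp)

lemma H2_corner: "H2 n uhj \<rho> s 0 0 = - \<rho> * (\<Sum>k=1..n. (uhj k)\<^sup>2)"
  by (simp add: H2_def Let_def bnum_def)

lemma H2_border_entries:
  assumes k: "k \<in> {1..n}"
  shows "H2 n uhj \<rho> s 0 k = \<rho> * uhj k" "H2 n uhj \<rho> s 0 (n+k) = - s k / 2"
    "H2 n uhj \<rho> s k 0 = \<rho> * uhj k" "H2 n uhj \<rho> s (n+k) 0 = - s k / 2"
  using bnum_bpos_blocks[OF k] by (simp_all add: H2_def Let_def)

lemma H2_inner_entries:
  assumes p: "p \<in> {1..n}" and q: "q \<in> {1..n}"
  shows "H2 n uhj \<rho> s p q = (if p = q then - \<rho> else 0)"
    "H2 n uhj \<rho> s p (n+q) = (if p = q then 1/2 else 0)"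
    "H2 n uhj \<rho> s (n+p) q = (if p = q then 1/2 else 0)"
    "H2 n uhj \<rho> s (n+p) (n+q) = 0"
  using bnum_bpos_blocks[OF p] bnum_bpos_blocks[OF q] by (simp_all add: H2_def Let_def)

lemma H2_first_row_sum:
  "(\<Sum>j<2*n+1. H2 n uhj \<rho> s 0 j * x j) = - \<rho> * (\<Sum>k=1..n. (uhj k)\<^sup>2) * x 0
     + (\<Sum>q=1..n. \<rho> * uhj q * x q) + (\<Sum>q=1..n. - s q / 2 * x (n+q))"
  unfolding sum_lessThan_2_blocks by (simp add: H2_corner H2_border_entries)

lemma H2_row_sums:
  assumes p: "p \<in> {1..n}"
  shows "(\<Sum>j<2*n+1. H2 n uhj \<rho> s p j * x j) = \<rho> * uhj p * x 0 - \<rho> * x p + 1/2 * x (n+p)"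
    "(\<Sum>j<2*n+1. H2 n uhj \<rho> s (n+p) j * x j) = - s p / 2 * x 0 + 1/2 * x p"
  using sum_delta_left[OF _ p, of "1/2" "\<lambda>q. x (n+q)"] sum_delta_left[OF _ p, of "- \<rho>" x]
    sum_delta_left[OF _ p, of "1/2" x]
  unfolding sum_lessThan_2_blocks
  by (simp_all add: H2_inner_entries[OF p] H2_border_entries[OF p])

lemma quad_form_H2:
  "quad_form (2*n+1) (shiftM \<beta> (H2 n uhj \<rho> s)) x = \<beta> * (x 0)\<^sup>2 -
     (\<Sum>k=1..n. (x k - x 0 * s k) * x (n+k) - \<rho> * (x k - x 0 * uhj k)\<^sup>2)"
proof -
  have "quad_form (2*n+1) (shiftM \<beta> (H2 n uhj \<rho> s)) x =
      \<beta> * (x 0)\<^sup>2 - (\<Sum>i<2*n+1. x i * (\<Sum>j<2*n+1. H2 n uhj \<rho> s i j * x j))"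
    by (rule quad_form_shiftM) simp
  also have "(\<Sum>i<2*n+1. x i * (\<Sum>j<2*n+1. H2 n uhj \<rho> s i j * x j)) =
     x 0 * (- \<rho> * (\<Sum>k=1..n. (uhj k)\<^sup>2) * x 0 + (\<Sum>q=1..n. \<rho> * uhj q * x q)
       + (\<Sum>q=1..n. - s q / 2 * x (n+q)))
     + (\<Sum>p=1..n. x p * (\<rho> * uhj p * x 0 - \<rho> * x p + 1/2 * x (n+p)))
     + (\<Sum>p=1..n. x (n+p) * (- s p / 2 * x 0 + 1/2 * x p))"
  proof -
    have a: "(\<Sum>p=1..n. x p * (\<Sum>j<2*n+1. H2 n uhj \<rho> s p j * x j)) =
        (\<Sum>p=1..n. x p * (\<rho> * uhj p * x 0 - \<rho> * x p + 1/2 * x (n+p)))"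
      by (rule sum.cong[OF refl]) (subst H2_row_sums(1), auto)
    have b: "(\<Sum>p=1..n. x (n+p) * (\<Sum>j<2*n+1. H2 n uhj \<rho> s (n+p) j * x j)) =
        (\<Sum>p=1..n. x (n+p) * (- s p / 2 * x 0 + 1/2 * x p))"
      by (rule sum.cong[OF refl]) (subst H2_row_sums(2), auto)
    show ?thesis
      unfolding sum_lessThan_2_blocks[of "\<lambda>i. x i * (\<Sum>j<2*n+1. H2 n uhj \<rho> s i j * x j)"]
        a b H2_first_row_sum ..
  qed
  also have "\<dots> = (\<Sum>k=1..n. (x k - x 0 * s k) * x (n+k) - \<rho> * (x k - x 0 * uhj k)\<^sup>2)"
    by (simp only: sum_distrib_left sum_distrib_right sum.distrib[symmetric] sum_subtractf[symmetric])
       (rule sum.cong[OF refl], simp add: algebra_simps power2_eq_square)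
  finally show ?thesis .
qed

end

definition stack_blocks :: "nat \<Rightarrow> real \<Rightarrow> (nat \<Rightarrow> real) list \<Rightarrow> nat \<Rightarrow> real" where
  "stack_blocks n t bs i = (if i = 0 then t else if i \<le> length bs * n then (bs ! ((i-1) div n)) (bpos n i) else 0)"

lemma stack_blocks_in_vecs0: "length bs = m \<Longrightarrow> stack_blocks n t bs \<in> vecs0 (m * n + 1)"
  by (auto simp: vecs0_def stack_blocks_def)

lemma blk_stack_blocks:
  assumes "j < length bs" "bs ! j \<in> vecs n"
  shows "blk n (stack_blocks n t bs) j = bs ! j"
proof
  fix i
  show "blk n (stack_blocks n t bs) j i = (bs ! j) i"
  proof (cases "1 \<le> i \<and> i \<le> n")
    case True
    then have "i \<in> {1..n}" by simp
    from bnum_bpos_block[OF this, of j] have "(j*n+i-1) div n = j" "bpos n (j*n+i) = i"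
      using True by (auto simp: bnum_def)
    moreover have "j*n + i \<le> length bs * n"
      using assms(1) True by (metis Suc_leI add_le_mono1 mult_Suc mult_le_mono1 add.commute order_trans)
    ultimately show ?thesis using True by (simp add: blk_def stack_blocks_def)
  next
    case False
    then show ?thesis using assms(2) by (cases "i = 0") (auto simp: blk_def vecs_def)
  qed
qed

lemma blk_divide: "blk n (\<lambda>i. x i / t) b = (\<lambda>i. blk n x b i / t)"
  by (auto simp: blk_def)

lemma vecs_blk: "blk n x b \<in> vecs n"
  by (simp add: blk_def vecs_def)

lemma slice_blocks3_iff:
  "(\<forall>x\<in>vecs0 (3*n+1). x 0 = 1 \<longrightarrow> R (blk n x 0) (blk n x 1) (blk n x 2)) \<longleftrightarrow>
   (\<forall>a\<in>vecs n. \<forall>b\<in>vecs n. \<forall>e\<in>vecs n. R a b e)"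
proof (intro iffI ballI)
  fix a b e assume R: "\<forall>x\<in>vecs0 (3*n+1). x 0 = 1 \<longrightarrow> R (blk n x 0) (blk n x 1) (blk n x 2)"
    and "a \<in> vecs n" "b \<in> vecs n" "e \<in> vecs n"
  then have "blk n (stack_blocks n 1 [a, b, e]) 0 = a" "blk n (stack_blocks n 1 [a, b, e]) 1 = b"
    "blk n (stack_blocks n 1 [a, b, e]) 2 = e"
    by (simp_all add: blk_stack_blocks)
  moreover have "stack_blocks n 1 [a, b, e] \<in> vecs0 (3*n+1)" by (rule stack_blocks_in_vecs0) simp
  ultimately show "R a b e" using R by (force simp: stack_blocks_def)
qed (simp add: vecs_blk)

lemma slice_blocks2_iff:
  "(\<forall>x\<in>vecs0 (2*n+1). x 0 = 1 \<longrightarrow> R (blk n x 0) (blk n x 1)) \<longleftrightarrow> (\<forall>a\<in>vecs n. \<forall>b\<in>vecs n. R a b)"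
proof (intro iffI ballI)
  fix a b assume R: "\<forall>x\<in>vecs0 (2*n+1). x 0 = 1 \<longrightarrow> R (blk n x 0) (blk n x 1)"
    and "a \<in> vecs n" "b \<in> vecs n"
  then have "blk n (stack_blocks n 1 [a, b]) 0 = a" "blk n (stack_blocks n 1 [a, b]) 1 = b"
    by (simp_all add: blk_stack_blocks)
  moreover have "stack_blocks n 1 [a, b] \<in> vecs0 (2*n+1)" by (rule stack_blocks_in_vecs0) simp
  ultimately show "R a b" using R by (force simp: stack_blocks_def)
qed (simp add: vecs_blk)

context
  fixes n :: nat and uhj s :: "nat \<Rightarrow> real" and \<rho> \<beta> :: real
begin

lemma quad_form_H1_slice:
  assumes "x 0 = 1"
  shows "quad_form (3*n+1) (shiftM \<beta> (H1 n uhj \<rho> s)) x = \<beta> -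
    ((\<Sum>k=1..n. (blk n x 0 k - blk n x 1 k + uhj k - s k) * blk n x 2 k)
      - \<rho> * (\<Sum>k=1..n. blk n x 0 k + blk n x 1 k))"
proof -
  have "(\<Sum>k=1..n. (uhj k - s k) * x (2*n+k)) + (\<Sum>k=1..n. (x k - x (n+k)) * x (2*n+k)) =
      (\<Sum>k=1..n. (blk n x 0 k - blk n x 1 k + uhj k - s k) * blk n x 2 k)"
    unfolding sum.distrib[symmetric] by (rule sum.cong) (auto simp: blk_def algebra_simps)
  moreover have "(\<Sum>k=1..n. x k + x (n+k)) = (\<Sum>k=1..n. blk n x 0 k + blk n x 1 k)"
    by (rule sum.cong) (auto simp: blk_def)
  ultimately show ?thesis unfolding quad_form_H1 using assms by simp
qed

lemma quad_form_H2_slice: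
  assumes "x 0 = 1"
  shows "quad_form (2*n+1) (shiftM \<beta> (H2 n uhj \<rho> s)) x = \<beta> -
    ((\<Sum>k=1..n. (blk n x 0 k - s k) * blk n x 1 k) - \<rho> * (\<Sum>k=1..n. (blk n x 0 k - uhj k)\<^sup>2))"
proof -
  have "(\<Sum>k=1..n. (x k - x 0 * s k) * x (n+k) - \<rho> * (x k - x 0 * uhj k)\<^sup>2) =
      (\<Sum>k=1..n. (blk n x 0 k - s k) * blk n x 1 k) - \<rho> * (\<Sum>k=1..n. (blk n x 0 k - uhj k)\<^sup>2)"
    unfolding sum_distrib_left sum_subtractf[symmetric]
    by (rule sum.cong) (auto simp: blk_def assms)
  then show ?thesis unfolding quad_form_H2 using assms by simp
qed

lemma COP_H1_iff:
  "shiftM \<beta> (H1 n uhj \<rho> s) \<in> COP (3*n+1) (K1 n c d C U uhj) \<longleftrightarrow>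
   (\<forall>up um y. (up, um, y) \<in> F1 n c d C U uhj \<longrightarrow>
      (\<Sum>k=1..n. (up k - um k + uhj k - s k) * y k) - \<rho> * (\<Sum>k=1..n. up k + um k) \<le> \<beta>)"
proof -
  let ?M = "shiftM \<beta> (H1 n uhj \<rho> s)"
  let ?G = "\<lambda>up um y. (\<Sum>k=1..n. (up k - um k + uhj k - s k) * y k) - \<rho> * (\<Sum>k=1..n. up k + um k)"
  have sym: "\<forall>i<3*n+1. \<forall>j<3*n+1. ?M i j = ?M j i"
    using H1_sym by (blast intro: shiftM_sym)
  have "?M \<in> COP (3*n+1) (K1 n c d C U uhj) \<longleftrightarrow> (\<forall>x\<in>vecs0 (3*n+1). x 0 = 1 \<longrightarrow>
      (blk n x 0, blk n x 1, blk n x 2) \<in> F1 n c d C U uhj \<longrightarrow> 0 \<le> quad_form (3*n+1) ?M x)"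
    unfolding K1_def blk_divide[symmetric]
    by (rule COP_perspective_iff[OF sym, where P = "\<lambda>y. (blk n y 0, blk n y 1, blk n y 2) \<in> F1 n c d C U uhj"])
  also have "\<dots> \<longleftrightarrow> (\<forall>x\<in>vecs0 (3*n+1). x 0 = 1 \<longrightarrow>
      (blk n x 0, blk n x 1, blk n x 2) \<in> F1 n c d C U uhj \<longrightarrow> ?G (blk n x 0) (blk n x 1) (blk n x 2) \<le> \<beta>)"
    by (intro ball_cong imp_cong refl) (simp only: quad_form_H1_slice diff_ge_0_iff_ge)
  also have "\<dots> \<longleftrightarrow> (\<forall>up\<in>vecs n. \<forall>um\<in>vecs n. \<forall>y\<in>vecs n. (up, um, y) \<in> F1 n c d C U uhj \<longrightarrow> ?G up um y \<le> \<beta>)"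
    by (rule slice_blocks3_iff)
  also have "\<dots> \<longleftrightarrow> (\<forall>up um y. (up, um, y) \<in> F1 n c d C U uhj \<longrightarrow> ?G up um y \<le> \<beta>)"
    by (auto simp: F1_def Yset_def)
  finally show ?thesis .
qed

lemma COP_H2_iff:
  assumes "U \<subseteq> vecs n"
  shows "shiftM \<beta> (H2 n uhj \<rho> s) \<in> COP (2*n+1) (K2 n c d C U) \<longleftrightarrow>
   (\<forall>u y. (u, y) \<in> F2 n c d C U \<longrightarrow>
      (\<Sum>k=1..n. (u k - s k) * y k) - \<rho> * (\<Sum>k=1..n. (u k - uhj k)\<^sup>2) \<le> \<beta>)"
proof -
  let ?M = "shiftM \<beta> (H2 n uhj \<rho> s)"
  let ?G = "\<lambda>u y. (\<Sum>k=1..n. (u k - s k) * y k) - \<rho> * (\<Sum>k=1..n. (u k - uhj k)\<^sup>2)"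
  have sym: "\<forall>i<2*n+1. \<forall>j<2*n+1. ?M i j = ?M j i"
    using H2_sym by (blast intro: shiftM_sym)
  have "?M \<in> COP (2*n+1) (K2 n c d C U) \<longleftrightarrow> (\<forall>x\<in>vecs0 (2*n+1). x 0 = 1 \<longrightarrow>
      (blk n x 0, blk n x 1) \<in> F2 n c d C U \<longrightarrow> 0 \<le> quad_form (2*n+1) ?M x)"
    unfolding K2_def blk_divide[symmetric]
    by (rule COP_perspective_iff[OF sym, where P = "\<lambda>y. (blk n y 0, blk n y 1) \<in> F2 n c d C U"])
  also have "\<dots> \<longleftrightarrow> (\<forall>x\<in>vecs0 (2*n+1). x 0 = 1 \<longrightarrow>
      (blk n x 0, blk n x 1) \<in> F2 n c d C U \<longrightarrow> ?G (blk n x 0) (blk n x 1) \<le> \<beta>)"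
    by (intro ball_cong imp_cong refl) (simp only: quad_form_H2_slice diff_ge_0_iff_ge)
  also have "\<dots> \<longleftrightarrow> (\<forall>u\<in>vecs n. \<forall>y\<in>vecs n. (u, y) \<in> F2 n c d C U \<longrightarrow> ?G u y \<le> \<beta>)"
    by (rule slice_blocks2_iff)
  also have "\<dots> \<longleftrightarrow> (\<forall>u y. (u, y) \<in> F2 n c d C U \<longrightarrow> ?G u y \<le> \<beta>)"
    using assms by (auto simp: F2_def Yset_def)
  finally show ?thesis .
qed

end

lemma pnorm_pow_1: "pnorm_pow 1 n u v = (\<Sum>i=1..n. \<bar>u i - v i\<bar>)"
  by (simp add: pnorm_pow_def)

lemma pnorm_pow_2: "pnorm_pow 2 n u v = (\<Sum>i=1..n. (u i - v i)\<^sup>2)"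
  by (simp add: pnorm_pow_def)

text \<open>\<open>F1\<close> writes the deviation \<open>u - uhj\<close> as \<open>up - um\<close> with nonnegative parts; the cheapest
  such split, into positive and negative parts, costs exactly the \<open>p = 1\<close> distance.\<close>

lemma pnorm_pow_1_le_split:
  assumes "\<forall>i\<in>{1..n}. 0 \<le> up i \<and> 0 \<le> um i"
  shows "pnorm_pow 1 n (\<lambda>i. up i - um i + v i) v \<le> (\<Sum>k=1..n. up k + um k)"
  unfolding pnorm_pow_1 using assms by (intro sum_mono) (force simp: abs_le_iff)

lemma pnorm_pow_1_split:
  assumes "u \<in> vecs n" "v \<in> vecs n"
  obtains up um where "\<forall>i\<in>{1..n}. 0 \<le> up i \<and> 0 \<le> um i" "up \<in> vecs n" "um \<in> vecs n"
    "(\<lambda>i. up i - um i + v i) = u" "(\<Sum>k=1..n. up k + um k) = pnorm_pow 1 n u v"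
proof
  let ?up = "\<lambda>k. if 1 \<le> k \<and> k \<le> n then max 0 (u k - v k) else 0"
  let ?um = "\<lambda>k. if 1 \<le> k \<and> k \<le> n then max 0 (v k - u k) else 0"
  show "(\<lambda>i. ?up i - ?um i + v i) = u"
  proof
    fix i show "?up i - ?um i + v i = u i"
      using assms by (cases "i = 0") (auto simp: vecs_def)
  qed
  show "(\<Sum>k=1..n. ?up k + ?um k) = pnorm_pow 1 n u v"
    unfolding pnorm_pow_1 by (rule sum.cong) auto
qed (auto simp: vecs_def)

context recourse_costs
begin

lemma F2_constraint_iff_robust:
  "(\<forall>u y. (u, y) \<in> F2 n c d C U \<longrightarrow>
      (\<Sum>k=1..n. (u k - s k) * y k) - \<rho> * (\<Sum>k=1..n. (u k - uhj k)\<^sup>2) \<le> \<beta>) \<longleftrightarrow>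
   (\<forall>u\<in>U. greedy_cost n c d C s u - \<rho> * pnorm_pow 2 n u uhj \<le> \<beta>)"
proof
  assume lifted: "\<forall>u y. (u, y) \<in> F2 n c d C U \<longrightarrow>
      (\<Sum>k=1..n. (u k - s k) * y k) - \<rho> * (\<Sum>k=1..n. (u k - uhj k)\<^sup>2) \<le> \<beta>"
  show "\<forall>u\<in>U. greedy_cost n c d C s u - \<rho> * pnorm_pow 2 n u uhj \<le> \<beta>"
  proof
    fix u assume "u \<in> U"
    then have "(u, dual_price n c d C s u) \<in> F2 n c d C U"
      using dual_price_in_Yset by (simp add: F2_def)
    with lifted show "greedy_cost n c d C s u - \<rho> * pnorm_pow 2 n u uhj \<le> \<beta>"
      unfolding greedy_cost_eq_dual[symmetric] pnorm_pow_2 by blast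
  qed
next
  assume robust: "\<forall>u\<in>U. greedy_cost n c d C s u - \<rho> * pnorm_pow 2 n u uhj \<le> \<beta>"
  show "\<forall>u y. (u, y) \<in> F2 n c d C U \<longrightarrow>
      (\<Sum>k=1..n. (u k - s k) * y k) - \<rho> * (\<Sum>k=1..n. (u k - uhj k)\<^sup>2) \<le> \<beta>"
  proof (intro allI impI)
    fix u y assume "(u, y) \<in> F2 n c d C U"
    then have "u \<in> U" "y \<in> Yset n c d C" by (auto simp: F2_def)
    with robust greedy_cost_ge_dual[of y u s]
    show "(\<Sum>k=1..n. (u k - s k) * y k) - \<rho> * (\<Sum>k=1..n. (u k - uhj k)\<^sup>2) \<le> \<beta>"
      unfolding pnorm_pow_2 by fastforce
  qed
qed

lemma F1_constraint_iff_robust: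
  assumes \<rho>: "0 \<le> \<rho>" and uhj: "uhj \<in> vecs n" and U: "U \<subseteq> vecs n"
  shows "(\<forall>up um y. (up, um, y) \<in> F1 n c d C U uhj \<longrightarrow>
      (\<Sum>k=1..n. (up k - um k + uhj k - s k) * y k) - \<rho> * (\<Sum>k=1..n. up k + um k) \<le> \<beta>) \<longleftrightarrow>
   (\<forall>u\<in>U. greedy_cost n c d C s u - \<rho> * pnorm_pow 1 n u uhj \<le> \<beta>)"
proof
  assume lifted: "\<forall>up um y. (up, um, y) \<in> F1 n c d C U uhj \<longrightarrow>
      (\<Sum>k=1..n. (up k - um k + uhj k - s k) * y k) - \<rho> * (\<Sum>k=1..n. up k + um k) \<le> \<beta>"
  show "\<forall>u\<in>U. greedy_cost n c d C s u - \<rho> * pnorm_pow 1 n u uhj \<le> \<beta>"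
  proof
    fix u assume u: "u \<in> U"
    obtain up um where split: "\<forall>i\<in>{1..n}. 0 \<le> up i \<and> 0 \<le> um i" "up \<in> vecs n" "um \<in> vecs n"
      "(\<lambda>i. up i - um i + uhj i) = u" "(\<Sum>k=1..n. up k + um k) = pnorm_pow 1 n u uhj"
      using pnorm_pow_1_split u U uhj by blast
    then have "(up, um, dual_price n c d C s u) \<in> F1 n c d C U uhj"
      using u dual_price_in_Yset by (simp add: F1_def)
    with lifted split(4,5) show "greedy_cost n c d C s u - \<rho> * pnorm_pow 1 n u uhj \<le> \<beta>"
      unfolding greedy_cost_eq_dual[symmetric] by (fastforce simp: fun_eq_iff)
  qed
next
  assume robust: "\<forall>u\<in>U. greedy_cost n c d C s u - \<rho> * pnorm_pow 1 n u uhj \<le> \<beta>"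
  show "\<forall>up um y. (up, um, y) \<in> F1 n c d C U uhj \<longrightarrow>
      (\<Sum>k=1..n. (up k - um k + uhj k - s k) * y k) - \<rho> * (\<Sum>k=1..n. up k + um k) \<le> \<beta>"
  proof (intro allI impI)
    fix up um y assume F: "(up, um, y) \<in> F1 n c d C U uhj"
    define u where "u = (\<lambda>i. up i - um i + uhj i)"
    have u: "u \<in> U" and y: "y \<in> Yset n c d C" and nonneg: "\<forall>i\<in>{1..n}. 0 \<le> up i \<and> 0 \<le> um i"
      using F unfolding F1_def u_def by auto
    have "\<rho> * pnorm_pow 1 n u uhj \<le> \<rho> * (\<Sum>k=1..n. up k + um k)"
      unfolding u_def using pnorm_pow_1_le_split[OF nonneg, of uhj] \<rho> by (rule mult_left_mono)
    with greedy_cost_ge_dual[OF y, of u s] robust u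
    show "(\<Sum>k=1..n. (up k - um k + uhj k - s k) * y k) - \<rho> * (\<Sum>k=1..n. up k + um k) \<le> \<beta>"
      by (fastforce simp: u_def)
  qed
qed

definition robust_feas ::
    "real \<Rightarrow> real \<Rightarrow> (nat \<Rightarrow> real) set \<Rightarrow> nat \<Rightarrow> (nat \<Rightarrow> nat \<Rightarrow> real) \<Rightarrow> real \<Rightarrow> (nat \<Rightarrow> real) \<Rightarrow> (nat \<Rightarrow> real) \<Rightarrow> bool"
  where "robust_feas p T U N uh \<rho> \<beta> s \<longleftrightarrow> s \<in> sched n T \<and> 0 \<le> \<rho> \<and>
     (\<forall>j\<in>{1..N}. \<forall>u\<in>U. greedy_cost n c d C s u - \<rho> * pnorm_pow p n u (uh j) \<le> \<beta> j)"

lemma prog1_feas_iff_robust: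
  assumes "U \<subseteq> vecs n" and "\<forall>j\<in>{1..N}. uh j \<in> U"
  shows "prog1_feas n T c d C U N uh \<rho> \<beta> s \<longleftrightarrow> robust_feas 1 T U N uh \<rho> \<beta> s"
proof (cases "0 \<le> \<rho>")
  case True
  have "(\<forall>j\<in>{1..N}. shiftM (\<beta> j) (H1 n (uh j) \<rho> s) \<in> COP (3*n+1) (K1 n c d C U (uh j))) \<longleftrightarrow>
      (\<forall>j\<in>{1..N}. \<forall>u\<in>U. greedy_cost n c d C s u - \<rho> * pnorm_pow 1 n u (uh j) \<le> \<beta> j)"
  proof (intro ball_cong refl)
    fix j assume "j \<in> {1..N}"
    then have "uh j \<in> vecs n" using assms by auto
    then show "shiftM (\<beta> j) (H1 n (uh j) \<rho> s) \<in> COP (3*n+1) (K1 n c d C U (uh j)) \<longleftrightarrow>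
        (\<forall>u\<in>U. greedy_cost n c d C s u - \<rho> * pnorm_pow 1 n u (uh j) \<le> \<beta> j)"
      unfolding COP_H1_iff by (rule F1_constraint_iff_robust[OF True _ assms(1)])
  qed
  then show ?thesis unfolding prog1_feas_def robust_feas_def by blast
qed (simp add: prog1_feas_def robust_feas_def)

lemma prog2_feas_iff_robust:
  assumes "U \<subseteq> vecs n"
  shows "prog2_feas n T c d C U N uh \<rho> \<beta> s \<longleftrightarrow> robust_feas 2 T U N uh \<rho> \<beta> s"
  unfolding prog2_feas_def robust_feas_def COP_H2_iff[OF assms] F2_constraint_iff_robust ..

end

section \<open>Strong duality over Wasserstein balls\<close>

definition sample_mean :: "nat \<Rightarrow> (nat \<Rightarrow> real) \<Rightarrow> real" where
  "sample_mean N f = (1 / real N) * (\<Sum>j=1..N. f j)"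

lemma sample_mean_mono: "(\<And>j. j \<in> {1..N} \<Longrightarrow> f j \<le> h j) \<Longrightarrow> sample_mean N f \<le> sample_mean N h"
  unfolding sample_mean_def by (intro mult_left_mono sum_mono) auto

lemma sample_mean_nonneg: "(\<And>j. j \<in> {1..N} \<Longrightarrow> 0 \<le> f j) \<Longrightarrow> 0 \<le> sample_mean N f"
  using sample_mean_mono[of N "\<lambda>_. 0" f] by (simp add: sample_mean_def)

lemma sample_mean_linear:
  "sample_mean N (\<lambda>j. a * f j + b * h j) = a * sample_mean N f + b * sample_mean N h"
  by (simp add: sample_mean_def sum.distrib sum_distrib_left algebra_simps)

lemma sample_mean_diff: "sample_mean N (\<lambda>j. f j - h j) = sample_mean N f - sample_mean N h"
  by (simp add: sample_mean_def sum_subtractf algebra_simps)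

lemma continuous_on_pnorm_pow: "0 < p \<Longrightarrow> continuous_on A (\<lambda>u. pnorm_pow p n u v)"
  unfolding pnorm_pow_def
  by (intro continuous_intros continuous_on_powr' continuous_on_coordinate) auto

lemma pnorm_pow_pair_measurable:
  "(\<lambda>z. pnorm_pow p n (fst z) (snd z)) \<in> borel_measurable (borel \<Otimes>\<^sub>M borel)"
proof -
  have [measurable]: "(\<lambda>z::(nat \<Rightarrow> real) \<times> (nat \<Rightarrow> real). fst z i) \<in> borel_measurable (borel \<Otimes>\<^sub>M borel)"
    "(\<lambda>z::(nat \<Rightarrow> real) \<times> (nat \<Rightarrow> real). snd z i) \<in> borel_measurable (borel \<Otimes>\<^sub>M borel)" for i
    by (rule measurable_compose[OF _ measurable_product_coordinates], simp)+
  show ?thesis unfolding pnorm_pow_def by measurable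
qed

lemma pnorm_pow_nonneg: "0 \<le> pnorm_pow p n u v"
  by (simp add: pnorm_pow_def sum_nonneg)

lemma pnorm_pow_self: "0 < p \<Longrightarrow> pnorm_pow p n v v = 0"
  by (simp add: pnorm_pow_def)

lemma prob_space_empirical: "prob_space (empirical N uh)"
  unfolding empirical_def by (rule prob_space.prob_space_distr) (auto simp: prob_space_measure_pmf)

lemma sets_empirical: "sets (empirical N uh) = sets borel"
  by (simp add: empirical_def)

lemma AE_empirical: "1 \<le> N \<Longrightarrow> AE v in empirical N uh. v \<in> uh ` {1..N}"
  unfolding empirical_def
  by (subst AE_distr_iff) (auto intro!: borel_closed finite_imp_closed simp: AE_measure_pmf_iff)

lemma integral_empirical:
  assumes "1 \<le> N" and [measurable]: "f \<in> borel_measurable borel"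
  shows "(\<integral>v. f v \<partial>empirical N uh) = sample_mean N (\<lambda>j. f (uh j))"
proof -
  have "(\<integral>v. f v \<partial>empirical N uh) = (\<integral>v. f v \<partial>measure_pmf (map_pmf uh (pmf_of_set {1..N})))"
    unfolding empirical_def by (subst integral_distr) auto
  also have "\<dots> = (\<Sum>j=1..N. f (uh j)) / real N"
    using assms(1) by (simp add: integral_pmf_of_set)
  finally show ?thesis by (simp add: sample_mean_def)
qed

lemma coupling_product:
  assumes "prob_space Q" and "sets Q = sets borel" and "prob_space M" and "sets M = sets borel"
  shows "Q \<Otimes>\<^sub>M M \<in> couplings Q M"
proof -
  interpret Q: prob_space Q by fact
  interpret M: prob_space M by fact
  interpret P: pair_prob_space Q M by unfold_locales
  have "distr (Q \<Otimes>\<^sub>M M) borel fst = distr (Q \<Otimes>\<^sub>M M) Q fst"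
    by (rule distr_cong) (auto simp: assms)
  also have "\<dots> = Q" by (rule M.distr_pair_fst)
  finally have fst: "distr (Q \<Otimes>\<^sub>M M) borel fst = Q" .
  have "distr (Q \<Otimes>\<^sub>M M) borel snd = distr (Q \<Otimes>\<^sub>M M) M snd"
    by (rule distr_cong) (auto simp: assms)
  also have "\<dots> = distr (distr (M \<Otimes>\<^sub>M Q) (Q \<Otimes>\<^sub>M M) (\<lambda>(x, y). (y, x))) M snd"
    by (subst P.distr_pair_swap[symmetric]) rule
  also have "\<dots> = distr (M \<Otimes>\<^sub>M Q) M fst"
    by (subst distr_distr) (auto intro!: distr_cong)
  also have "\<dots> = M" by (rule Q.distr_pair_fst)
  finally have snd: "distr (Q \<Otimes>\<^sub>M M) borel snd = M" .
  show ?thesis unfolding couplings_def using fst snd P.prob_space_axioms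
    by (auto simp: assms intro!: sets_pair_measure_cong)
qed

text \<open>The dimension \<open>n\<close> enters only through \<open>cost\<close>, so the locale predicate omits it.\<close>

locale wasserstein_dro =
  fixes n :: nat and p :: real and g :: "(nat \<Rightarrow> real) \<Rightarrow> real" and U :: "(nat \<Rightarrow> real) set"
    and N :: nat and uh :: "nat \<Rightarrow> nat \<Rightarrow> real" and eps :: real
  assumes g_cont: "continuous_on UNIV g" and p_pos: "0 < p"
    and U_compact: "compact U" and U_nonempty: "U \<noteq> {}" and uh_in_U: "\<forall>j\<in>{1..N}. uh j \<in> U"
    and N_pos: "1 \<le> N" and eps_pos: "0 < eps"
begin

abbreviation cost :: "(nat \<Rightarrow> real) \<Rightarrow> (nat \<Rightarrow> real) \<Rightarrow> real" where
  "cost u v \<equiv> pnorm_pow p n u v"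

definition inner_sup :: "real \<Rightarrow> (nat \<Rightarrow> real) \<Rightarrow> real" where
  "inner_sup \<rho> w = Sup ((\<lambda>u. g u - \<rho> * cost u w) ` U)"

definition dual_obj :: "real \<Rightarrow> real" where
  "dual_obj \<rho> = eps powr p * \<rho> + sample_mean N (\<lambda>j. inner_sup \<rho> (uh j))"

lemma g_measurable [measurable]: "g \<in> borel_measurable borel"
  by (rule borel_measurable_continuous_onI[OF g_cont])

lemma U_borel [measurable]: "U \<in> sets borel"
  using U_compact by (simp add: compact_imp_closed)

lemma inner_sup_attained:
  "\<exists>a\<in>U. inner_sup \<rho> w = g a - \<rho> * cost a w \<and> (\<forall>u\<in>U. g u - \<rho> * cost u w \<le> inner_sup \<rho> w)"
proof -
  have "continuous_on U (\<lambda>u. g u - \<rho> * cost u w)"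
    by (intro continuous_intros continuous_on_subset[OF g_cont] continuous_on_pnorm_pow p_pos) auto
  from continuous_attains_sup[OF U_compact U_nonempty this] obtain a where a: "a \<in> U"
    and max: "\<forall>u\<in>U. g u - \<rho> * cost u w \<le> g a - \<rho> * cost a w" by blast
  have "inner_sup \<rho> w = g a - \<rho> * cost a w"
    unfolding inner_sup_def by (rule cSup_eq_maximum) (use a max in auto)
  with a max show ?thesis by auto
qed

lemma inner_sup_upper: "u \<in> U \<Longrightarrow> g u - \<rho> * cost u w \<le> inner_sup \<rho> w"
  using inner_sup_attained by blast

lemma cost_bounded: "\<exists>K. \<forall>j\<in>{1..N}. \<forall>u\<in>U. cost u (uh j) \<le> K"
proof -
  have "continuous_on U (\<lambda>u. \<Sum>j=1..N. cost u (uh j))"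
    by (intro continuous_intros continuous_on_pnorm_pow p_pos)
  from continuous_attains_sup[OF U_compact U_nonempty this] obtain a
    where max: "\<forall>u\<in>U. (\<Sum>j=1..N. cost u (uh j)) \<le> (\<Sum>j=1..N. cost a (uh j))" by blast
  have "cost u (uh j) \<le> (\<Sum>j=1..N. cost a (uh j))" if "j \<in> {1..N}" "u \<in> U" for j u
    using member_le_sum[OF that(1), of "\<lambda>j. cost u (uh j)"] max that(2) pnorm_pow_nonneg
    by (meson finite_atLeastAtMost order_trans)
  then show ?thesis by blast
qed

lemma inner_sup_lipschitz:
  assumes K: "\<forall>u\<in>U. cost u w \<le> K"
  shows "\<bar>inner_sup \<rho> w - inner_sup \<rho>' w\<bar> \<le> K * \<bar>\<rho> - \<rho>'\<bar>"
proof -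
  have "inner_sup r w - inner_sup r' w \<le> K * \<bar>r - r'\<bar>" for r r'
  proof -
    obtain a where a: "a \<in> U" "inner_sup r w = g a - r * cost a w"
      using inner_sup_attained by blast
    have "(r' - r) * cost a w \<le> \<bar>r - r'\<bar> * K"
      using pnorm_pow_nonneg[of p n a w] K a(1) abs_ge_self[of "r' - r"]
      by (metis abs_ge_zero abs_minus_commute mult_mono order_trans)
    then show ?thesis using a inner_sup_upper[OF a(1), of r' w] by (simp add: algebra_simps)
  qed
  from this[of \<rho> \<rho>'] this[of \<rho>' \<rho>] show ?thesis by (simp add: abs_minus_commute abs_le_iff)
qed

lemma continuous_on_dual_obj: "continuous_on A dual_obj"
proof -
  obtain K where K: "\<forall>j\<in>{1..N}. \<forall>u\<in>U. cost u (uh j) \<le> K" using cost_bounded by blast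
  have "K \<ge> 0" using K N_pos U_nonempty pnorm_pow_nonneg by (meson atLeastAtMost_iff ex_in_conv le_refl order_trans)
  have "continuous_on A (\<lambda>\<rho>. inner_sup \<rho> (uh j))" if "j \<in> {1..N}" for j
  proof (rule continuous_on_subset[OF lipschitz_on_continuous_on, of K UNIV])
    show "K-lipschitz_on UNIV (\<lambda>\<rho>. inner_sup \<rho> (uh j))"
      using inner_sup_lipschitz K that \<open>K \<ge> 0\<close> by (intro lipschitz_onI) (auto simp: dist_real_def)
  qed simp
  then show ?thesis unfolding dual_obj_def sample_mean_def by (intro continuous_intros) auto
qed

lemma dual_obj_lower: "eps powr p * \<rho> + sample_mean N (\<lambda>j. g (uh j)) \<le> dual_obj \<rho>"
proof -
  have "g (uh j) \<le> inner_sup \<rho> (uh j)" if "j \<in> {1..N}" for j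
    using inner_sup_upper[of "uh j" \<rho> "uh j"] uh_in_U that pnorm_pow_self[OF p_pos] by auto
  then show ?thesis unfolding dual_obj_def using sample_mean_mono by (metis add_left_mono)
qed

text \<open>The dual objective is continuous and grows at least like \<open>eps powr p * \<rho>\<close>,
  so it attains its minimum over \<open>\<rho> \<ge> 0\<close> on a compact interval.\<close>

lemma dual_obj_has_min: "\<exists>r\<ge>0. \<forall>\<rho>\<ge>0. dual_obj r \<le> dual_obj \<rho>"
proof -
  define A where "A = sample_mean N (\<lambda>j. g (uh j))"
  define R where "R = (dual_obj 0 - A) / eps powr p"
  have E: "0 < eps powr p" using eps_pos by simp
  have R: "0 \<le> R" using dual_obj_lower[of 0] E unfolding R_def A_def by simp
  obtain r where r: "r \<in> {0..R}" and min: "\<forall>\<rho>\<in>{0..R}. dual_obj r \<le> dual_obj \<rho>"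
    using continuous_attains_inf[OF compact_Icc _ continuous_on_dual_obj, of 0 R] R by auto
  have "dual_obj r \<le> dual_obj \<rho>" if "0 \<le> \<rho>" for \<rho>
  proof (cases "\<rho> \<le> R")
    case False
    have "dual_obj r \<le> dual_obj 0" using min R by auto
    also have "\<dots> = eps powr p * R + A" unfolding R_def using E by simp
    also have "\<dots> \<le> eps powr p * \<rho> + A" using False E by simp
    also have "\<dots> \<le> dual_obj \<rho>" using dual_obj_lower unfolding A_def by simp
    finally show ?thesis .
  qed (use min that in auto)
  then show ?thesis using r by auto
qed

text \<open>A Borel measurable function that agrees with \<open>inner_sup \<rho>\<close> on the sample points,
  which is all the empirical distribution sees.\<close>

definition sample_sup :: "real \<Rightarrow> (nat \<Rightarrow> real) \<Rightarrow> real" where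
  "sample_sup \<rho> v = (\<Sum>w\<in>uh ` {1..N}. indicator {w} v * inner_sup \<rho> w)"

lemma sample_sup_measurable [measurable]: "sample_sup \<rho> \<in> borel_measurable borel"
  unfolding sample_sup_def by measurable

lemma sample_sup_eq: "v \<in> uh ` {1..N} \<Longrightarrow> sample_sup \<rho> v = inner_sup \<rho> v"
  unfolding sample_sup_def indicator_def by (simp add: if_distrib[of "\<lambda>z. z * _"] sum.delta cong: if_cong)

lemma coupling_support:
  assumes Q: "distr_on U Q" and P: "P \<in> couplings Q (empirical N uh)"
  shows "AE z in P. fst z \<in> U \<and> snd z \<in> uh ` {1..N}"
proof -
  have sets_P: "sets P = sets (borel \<Otimes>\<^sub>M borel)" and fst_P: "distr P borel fst = Q"
    and snd_P: "distr P borel snd = empirical N uh"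
    using P unfolding couplings_def by auto
  have [measurable]: "fst \<in> measurable P borel" "snd \<in> measurable P borel"
    by (simp_all add: measurable_cong_sets[OF sets_P refl])
  have "AE u in Q. u \<in> U"
  proof -
    interpret Q: prob_space Q using Q by (simp add: distr_on_def)
    show ?thesis using Q by (subst Q.AE_in_set_eq_1) (auto simp: distr_on_def Q.emeasure_eq_measure)
  qed
  then have "AE z in P. fst z \<in> U"
    unfolding fst_P[symmetric] by (rule AE_distrD[rotated]) measurable
  moreover have "AE z in P. snd z \<in> uh ` {1..N}"
    using AE_empirical[OF N_pos, of uh] unfolding snd_P[symmetric] by (rule AE_distrD[rotated]) measurable
  ultimately show ?thesis by eventually_elim simp
qed

lemma coupling_integrable:
  assumes Q: "distr_on U Q" and P: "P \<in> couplings Q (empirical N uh)"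
  shows "integrable P (\<lambda>z. g (fst z))" "integrable P (\<lambda>z. cost (fst z) (snd z))"
    "integrable P (\<lambda>z. sample_sup \<rho> (snd z))"
proof -
  have sets_P: "sets P = sets (borel \<Otimes>\<^sub>M borel)" and "prob_space P"
    using P unfolding couplings_def by auto
  interpret P: prob_space P by fact
  have [measurable]: "fst \<in> measurable P borel" "snd \<in> measurable P borel"
    "(\<lambda>z. cost (fst z) (snd z)) \<in> borel_measurable P"
    using pnorm_pow_pair_measurable by (simp_all add: measurable_cong_sets[OF sets_P refl])
  note support = coupling_support[OF Q P]
  obtain B where B: "\<forall>u\<in>U. \<bar>g u\<bar> \<le> B"
    using compact_continuous_image[OF continuous_on_subset[OF g_cont] U_compact]
    by (metis bounded_iff compact_imp_bounded image_eqI real_norm_def subset_UNIV)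
  show "integrable P (\<lambda>z. g (fst z))"
    by (rule P.integrable_const_bound[where B=B]) (use support B in auto)
  obtain K where K: "\<forall>j\<in>{1..N}. \<forall>u\<in>U. cost u (uh j) \<le> K" using cost_bounded by blast
  show "integrable P (\<lambda>z. cost (fst z) (snd z))"
    by (rule P.integrable_const_bound[where B=K]) (use support K pnorm_pow_nonneg in \<open>auto elim!: AE_mp\<close>)
  have "\<bar>sample_sup \<rho> v\<bar> \<le> (\<Sum>w\<in>uh ` {1..N}. \<bar>inner_sup \<rho> w\<bar>)" for v
  proof -
    have "\<bar>sample_sup \<rho> v\<bar> \<le> (\<Sum>w\<in>uh ` {1..N}. \<bar>indicator {w} v * inner_sup \<rho> w\<bar>)"
      unfolding sample_sup_def by (rule sum_abs)
    also have "\<dots> \<le> (\<Sum>w\<in>uh ` {1..N}. \<bar>inner_sup \<rho> w\<bar>)"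
      by (rule sum_mono) (auto simp: indicator_def)
    finally show ?thesis .
  qed
  then show "integrable P (\<lambda>z. sample_sup \<rho> (snd z))"
    by (intro P.integrable_const_bound[where B="\<Sum>w\<in>uh ` {1..N}. \<bar>inner_sup \<rho> w\<bar>"]) auto
qed

lemma expectation_le_coupling_bound:
  assumes \<rho>: "0 \<le> \<rho>" and Q: "distr_on U Q" and P: "P \<in> couplings Q (empirical N uh)"
  shows "(\<integral>u. g u \<partial>Q) \<le> \<rho> * (\<integral>z. cost (fst z) (snd z) \<partial>P) + sample_mean N (\<lambda>j. inner_sup \<rho> (uh j))"
proof -
  have sets_P: "sets P = sets (borel \<Otimes>\<^sub>M borel)" and fst_P: "distr P borel fst = Q"
    and snd_P: "distr P borel snd = empirical N uh"
    using P unfolding couplings_def by auto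
  have [measurable]: "fst \<in> measurable P borel" "snd \<in> measurable P borel"
    by (simp_all add: measurable_cong_sets[OF sets_P refl])
  note integrable = coupling_integrable[OF Q P]
  have "(\<integral>u. g u \<partial>Q) = (\<integral>z. g (fst z) \<partial>P)"
    unfolding fst_P[symmetric] by (rule integral_distr) measurable
  also have "\<dots> \<le> (\<integral>z. \<rho> * cost (fst z) (snd z) + sample_sup \<rho> (snd z) \<partial>P)"
  proof (rule integral_mono_AE[OF integrable(1)])
    show "integrable P (\<lambda>z. \<rho> * cost (fst z) (snd z) + sample_sup \<rho> (snd z))"
      using integrable by auto
    show "AE z in P. g (fst z) \<le> \<rho> * cost (fst z) (snd z) + sample_sup \<rho> (snd z)"
      using coupling_support[OF Q P]
    proof eventually_elim
      case (elim z)
      then show ?case using inner_sup_upper[of "fst z" \<rho> "snd z"] sample_sup_eq[of "snd z" \<rho>] by simp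
    qed
  qed
  also have "\<dots> = \<rho> * (\<integral>z. cost (fst z) (snd z) \<partial>P) + (\<integral>z. sample_sup \<rho> (snd z) \<partial>P)"
    using integrable by simp
  also have "(\<integral>z. sample_sup \<rho> (snd z) \<partial>P) = (\<integral>v. sample_sup \<rho> v \<partial>empirical N uh)"
    unfolding snd_P[symmetric] by (rule integral_distr[symmetric]) measurable
  also have "\<dots> = sample_mean N (\<lambda>j. inner_sup \<rho> (uh j))"
    unfolding integral_empirical[OF N_pos sample_sup_measurable] sample_mean_def
    by (simp add: sample_sup_eq)
  finally show ?thesis .
qed

lemma expectation_le_dual_obj:
  assumes Q: "Q \<in> ambiguity p n U N uh eps" and \<rho>: "0 \<le> \<rho>"
  shows "(\<integral>u. g u \<partial>Q) \<le> dual_obj \<rho>"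
proof -
  have Q_distr: "distr_on U Q" and W: "wdist p n Q (empirical N uh) \<le> eps"
    using Q unfolding ambiguity_def by auto
  let ?C = "couplings Q (empirical N uh)"
  let ?X = "INF P \<in> ?C. (\<integral>z. cost (fst z) (snd z) \<partial>P)"
  let ?M = "sample_mean N (\<lambda>j. inner_sup \<rho> (uh j))"
  have C: "Q \<Otimes>\<^sub>M empirical N uh \<in> ?C"
    using Q_distr prob_space_empirical sets_empirical by (intro coupling_product) (auto simp: distr_on_def)
  have cost_int_nonneg: "0 \<le> (\<integral>z. cost (fst z) (snd z) \<partial>P)" for P
    by (intro integral_nonneg_AE) (simp add: pnorm_pow_nonneg)
  have X_nonneg: "0 \<le> ?X" using C by (intro cINF_greatest) (auto simp: cost_int_nonneg)
  have "?X = (?X powr (1 / p)) powr p" using X_nonneg p_pos by (simp add: powr_powr)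
  also have "\<dots> \<le> eps powr p"
    using W p_pos by (intro powr_mono2) (auto simp: wdist_def)
  finally have X: "?X \<le> eps powr p" .
  have "(\<integral>u. g u \<partial>Q) \<le> \<rho> * ?X + ?M"
  proof (cases "\<rho> = 0")
    case True
    then show ?thesis using expectation_le_coupling_bound[OF \<rho> Q_distr C] by simp
  next
    case False
    then have "((\<integral>u. g u \<partial>Q) - ?M) / \<rho> \<le> ?X"
      using \<rho> C expectation_le_coupling_bound[OF \<rho> Q_distr]
      by (intro cINF_greatest) (auto simp: field_simps)
    then show ?thesis using False \<rho> by (simp add: field_simps)
  qed
  also have "\<dots> \<le> dual_obj \<rho>"
    unfolding dual_obj_def using X \<rho> by (simp add: mult_left_mono mult.commute)
  finally show ?thesis .
qed

end

lemma distr_map_pmf: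
  assumes "space M = UNIV"
  shows "distr (measure_pmf (map_pmf f q)) M h = distr (measure_pmf q) M (\<lambda>x. h (f x))"
proof -
  have "distr (measure_pmf (map_pmf f q)) M h = distr (distr (measure_pmf q) (count_space UNIV) f) M h"
    by (simp add: map_pmf_rep_eq)
  also have "\<dots> = distr (measure_pmf q) M (h \<circ> f)"
    by (rule distr_distr) (auto simp: assms)
  finally show ?thesis by (simp add: comp_def)
qed

lemma integral_uniform_bernoulli:
  fixes f :: "nat \<times> bool \<Rightarrow> real"
  assumes N: "1 \<le> N" and l: "0 \<le> l" "l \<le> 1"
  shows "(\<integral>k. f k \<partial>measure_pmf (pair_pmf (pmf_of_set {1..N}) (bernoulli_pmf l))) =
    sample_mean N (\<lambda>j. l * f (j, True) + (1 - l) * f (j, False))"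
proof -
  let ?P = "pair_pmf (pmf_of_set {1..N}) (bernoulli_pmf l)"
  have ne: "{1..N} \<noteq> {}" using N by auto
  have "(\<integral>k. f k \<partial>measure_pmf ?P) = (\<Sum>k\<in>{1..N} \<times> UNIV. f k * pmf ?P k)"
    by (rule integral_measure_pmf_real) (use ne in auto)
  also have "\<dots> = (\<Sum>j\<in>{1..N}. \<Sum>b\<in>UNIV. f (j, b) * pmf ?P (j, b))"
    by (subst sum.cartesian_product) (simp add: case_prod_beta)
  also have "\<dots> = (\<Sum>j\<in>{1..N}. \<Sum>b\<in>UNIV. f (j, b) * (pmf (pmf_of_set {1..N}) j * pmf (bernoulli_pmf l) b))"
    by (simp only: pmf_pair)
  also have "\<dots> = (\<Sum>j\<in>{1..N}. (1 / real N) * (l * f (j, True) + (1 - l) * f (j, False)))"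
    using ne l by (intro sum.cong) (auto simp: UNIV_bool algebra_simps add_divide_distrib[symmetric])
  finally show ?thesis by (simp add: sample_mean_def sum_distrib_left)
qed

lemma coupling_of_pmf:
  assumes "map_pmf fst P0 = pmf_of_set {1..N}"
  shows "distr (measure_pmf P0) (borel \<Otimes>\<^sub>M borel) (\<lambda>k. (x k, uh (fst k))) \<in>
           couplings (distr (measure_pmf P0) borel x) (empirical N uh)"
proof -
  let ?P = "distr (measure_pmf P0) (borel \<Otimes>\<^sub>M borel) (\<lambda>k. (x k, uh (fst k)))"
  have space_pair: "space (borel \<Otimes>\<^sub>M borel) = UNIV" by (simp add: space_pair_measure)
  have "distr ?P borel fst = distr (measure_pmf P0) borel x"
    by (subst distr_distr) (auto simp: space_pair comp_def)
  moreover have "distr ?P borel snd = distr (measure_pmf P0) borel (\<lambda>k. uh (fst k))"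
    by (subst distr_distr) (auto simp: space_pair comp_def)
  moreover have "\<dots> = empirical N uh"
    unfolding empirical_def distr_map_pmf[of borel, simplified]
    by (simp add: distr_map_pmf[of borel fst, simplified, symmetric] assms)
  ultimately show ?thesis
    unfolding couplings_def
    by (auto simp: space_pair intro!: prob_space.prob_space_distr prob_space_measure_pmf)
qed

lemma wdist_le_of_coupling:
  assumes "0 < p" "0 \<le> eps" and P: "P \<in> couplings Q M"
    and "(\<integral>z. pnorm_pow p n (fst z) (snd z) \<partial>P) \<le> eps powr p"
  shows "wdist p n Q M \<le> eps"
proof -
  have "(INF P\<in>couplings Q M. \<integral>z. pnorm_pow p n (fst z) (snd z) \<partial>P) \<le> eps powr p"
    using assms by (intro cINF_lower2[OF _ P]) (auto intro!: bdd_belowI[of _ 0] integral_nonneg_AE pnorm_pow_nonneg)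
  then have "wdist p n Q M \<le> (eps powr p) powr (1 / p)"
    unfolding wdist_def using assms
    by (intro powr_mono2) (auto intro!: cINF_greatest integral_nonneg_AE pnorm_pow_nonneg)
  then show ?thesis using assms by (simp add: powr_powr)
qed

context wasserstein_dro
begin

abbreviation mean_cost :: "(nat \<Rightarrow> nat \<Rightarrow> real) \<Rightarrow> real" where
  "mean_cost a \<equiv> sample_mean N (\<lambda>j. cost (a j) (uh j))"

text \<open>The witness moves sample \<open>j\<close> to \<open>a j\<close> with probability \<open>l\<close> and to \<open>b j\<close> otherwise.\<close>

lemma mixture_in_ambiguity:
  assumes ab: "\<forall>j\<in>{1..N}. a j \<in> U \<and> b j \<in> U" and l: "0 \<le> l" "l \<le> 1"
    and budget: "l * mean_cost a + (1 - l) * mean_cost b \<le> eps powr p"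
  shows "\<exists>Q\<in>ambiguity p n U N uh eps.
           (\<integral>u. g u \<partial>Q) = l * sample_mean N (\<lambda>j. g (a j)) + (1 - l) * sample_mean N (\<lambda>j. g (b j))"
proof -
  define P0 where "P0 = pair_pmf (pmf_of_set {1..N}) (bernoulli_pmf l)"
  define pt where "pt = (\<lambda>k::nat \<times> bool. if snd k then a (fst k) else b (fst k))"
  define Q where "Q = distr (measure_pmf P0) borel pt"
  define P where "P = distr (measure_pmf P0) (borel \<Otimes>\<^sub>M borel) (\<lambda>k. (pt k, uh (fst k)))"
  have P: "P \<in> couplings Q (empirical N uh)"
    unfolding P_def Q_def by (rule coupling_of_pmf) (simp add: P0_def map_fst_pair_pmf)
  have "set_pmf P0 \<subseteq> {1..N} \<times> UNIV"
    using N_pos unfolding P0_def set_pair_pmf by auto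
  then have "emeasure Q U = 1"
    unfolding Q_def using ab
    by (subst emeasure_distr) (auto simp: pt_def intro!: measure_pmf.emeasure_eq_1_AE AE_pmfI)
  then have Q_distr: "distr_on U Q"
    unfolding distr_on_def Q_def by (auto intro: prob_space.prob_space_distr prob_space_measure_pmf)
  have "(\<integral>z. cost (fst z) (snd z) \<partial>P) = (\<integral>k. cost (pt k) (uh (fst k)) \<partial>measure_pmf P0)"
    unfolding P_def by (subst integral_distr) (auto simp: space_pair_measure pnorm_pow_pair_measurable)
  also have "\<dots> = l * mean_cost a + (1 - l) * mean_cost b"
    unfolding P0_def integral_uniform_bernoulli[OF N_pos l] sample_mean_linear[symmetric]
    by (simp add: pt_def)
  finally have "wdist p n Q (empirical N uh) \<le> eps"
    using budget p_pos eps_pos by (intro wdist_le_of_coupling[OF _ _ P]) auto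
  then have "Q \<in> ambiguity p n U N uh eps"
    using Q_distr by (simp add: ambiguity_def)
  moreover have "(\<integral>u. g u \<partial>Q) = (\<integral>k. g (pt k) \<partial>measure_pmf P0)"
    unfolding Q_def by (subst integral_distr) auto
  moreover have "(\<integral>k. g (pt k) \<partial>measure_pmf P0) =
      l * sample_mean N (\<lambda>j. g (a j)) + (1 - l) * sample_mean N (\<lambda>j. g (b j))"
    unfolding P0_def integral_uniform_bernoulli[OF N_pos l] sample_mean_linear[symmetric]
    by (simp add: pt_def)
  ultimately show ?thesis by auto
qed

end

context wasserstein_dro
begin

definition maximizers :: "real \<Rightarrow> (nat \<Rightarrow> nat \<Rightarrow> real) \<Rightarrow> bool" where
  "maximizers \<rho> a \<longleftrightarrow> (\<forall>j\<in>{1..N}. a j \<in> U \<and> inner_sup \<rho> (uh j) = g (a j) - \<rho> * cost (a j) (uh j))"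

lemma maximizers_exist: "\<exists>a. maximizers \<rho> a"
proof -
  have "\<forall>j\<in>{1..N}. \<exists>a\<in>U. inner_sup \<rho> (uh j) = g a - \<rho> * cost a (uh j)"
    using inner_sup_attained by blast
  then show ?thesis unfolding maximizers_def by (metis bchoice)
qed

lemma maximizers_mean:
  assumes "maximizers \<rho> a"
  shows "sample_mean N (\<lambda>j. g (a j)) = dual_obj \<rho> - \<rho> * (eps powr p - mean_cost a)"
proof -
  have "sample_mean N (\<lambda>j. g (a j)) = sample_mean N (\<lambda>j. 1 * inner_sup \<rho> (uh j) + \<rho> * cost (a j) (uh j))"
    using assms unfolding maximizers_def sample_mean_def by (auto intro!: sum.cong)
  then show ?thesis unfolding sample_mean_linear dual_obj_def by (simp add: algebra_simps)
qed

lemma dual_obj_subgradient: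
  assumes "maximizers \<rho>\<^sub>0 a"
  shows "dual_obj \<rho>\<^sub>0 + (\<rho> - \<rho>\<^sub>0) * (eps powr p - mean_cost a) \<le> dual_obj \<rho>"
proof -
  have "sample_mean N (\<lambda>j. g (a j) - \<rho> * cost (a j) (uh j)) \<le> sample_mean N (\<lambda>j. inner_sup \<rho> (uh j))"
    using assms inner_sup_upper by (intro sample_mean_mono) (auto simp: maximizers_def)
  then show ?thesis
    using maximizers_mean[OF assms]
    by (simp add: dual_obj_def sample_mean_diff sample_mean_linear[of _ 0 _ \<rho>, simplified] algebra_simps)
qed

context
  fixes r :: real
  assumes r_nonneg: "0 \<le> r" and r_min: "\<forall>\<rho>\<ge>0. dual_obj r \<le> dual_obj \<rho>"
begin

lemma mean_value_at_maximizers: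
  assumes "maximizers \<rho> a" "0 \<le> \<rho>"
  shows "dual_obj r - \<rho> * (eps powr p - mean_cost a) \<le> sample_mean N (\<lambda>j. g (a j))"
  using maximizers_mean[OF assms(1)] r_min assms(2) by simp

lemma mean_cost_right_of_min:
  assumes "maximizers (r + \<delta>) a" "0 < \<delta>"
  shows "mean_cost a \<le> eps powr p"
proof -
  have "dual_obj (r + \<delta>) - \<delta> * (eps powr p - mean_cost a) \<le> dual_obj r"
    using dual_obj_subgradient[OF assms(1), of r] by (simp add: algebra_simps)
  moreover have "dual_obj r \<le> dual_obj (r + \<delta>)" using r_min r_nonneg assms(2) by simp
  ultimately have "0 \<le> \<delta> * (eps powr p - mean_cost a)" by linarith
  then show ?thesis using assms(2) by (simp add: zero_le_mult_iff)
qed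

lemma mean_cost_left_of_min:
  assumes "maximizers (r - \<delta>) b" "0 < \<delta>" "\<delta> \<le> r"
  shows "eps powr p \<le> mean_cost b"
proof -
  have "dual_obj (r - \<delta>) + \<delta> * (eps powr p - mean_cost b) \<le> dual_obj r"
    using dual_obj_subgradient[OF assms(1), of r] by (simp add: algebra_simps)
  moreover have "dual_obj r \<le> dual_obj (r - \<delta>)" using r_min assms(3) by simp
  ultimately have "\<delta> * (eps powr p - mean_cost b) \<le> 0" by linarith
  then show ?thesis using assms(2) by (simp add: mult_le_0_iff)
qed

lemma near_optimal_at_zero:
  assumes r: "r = 0" and \<delta>: "0 < \<delta>"
  shows "\<exists>Q\<in>ambiguity p n U N uh eps. dual_obj r - \<delta> * eps powr p \<le> (\<integral>u. g u \<partial>Q)"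
proof -
  obtain a where a: "maximizers \<delta> a" using maximizers_exist by blast
  then have "mean_cost a \<le> eps powr p"
    using mean_cost_right_of_min[of \<delta> a] r \<delta> by simp
  moreover have "\<forall>j\<in>{1..N}. a j \<in> U" using a by (simp add: maximizers_def)
  ultimately obtain Q where Q: "Q \<in> ambiguity p n U N uh eps"
    and Q_val: "(\<integral>u. g u \<partial>Q) = sample_mean N (\<lambda>j. g (a j))"
    using mixture_in_ambiguity[of a a 1] by auto
  have "dual_obj r - \<delta> * (eps powr p - mean_cost a) \<le> sample_mean N (\<lambda>j. g (a j))"
    using mean_value_at_maximizers[OF a] \<delta> r by simp
  moreover have "0 \<le> \<delta> * mean_cost a" using \<delta> by (simp add: sample_mean_nonneg pnorm_pow_nonneg)
  ultimately have "dual_obj r - \<delta> * eps powr p \<le> (\<integral>u. g u \<partial>Q)"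
    unfolding Q_val by (simp add: algebra_simps)
  with Q show ?thesis by blast
qed

text \<open>For \<open>r > 0\<close> the maximizers at \<open>r + \<delta>\<close> and at \<open>r - \<delta>\<close> lie on opposite sides of the
  transport budget; mixing them so that the budget is met exactly loses at most \<open>2 \<delta> eps\<^sup>p\<close>.\<close>

lemma near_optimal_interior:
  assumes \<delta>: "0 < \<delta>" "\<delta> \<le> r"
  shows "\<exists>Q\<in>ambiguity p n U N uh eps. dual_obj r - 2 * \<delta> * eps powr p \<le> (\<integral>u. g u \<partial>Q)"
proof -
  let ?E = "eps powr p"
  obtain a where a: "maximizers (r + \<delta>) a" using maximizers_exist by blast
  obtain b where b: "maximizers (r - \<delta>) b" using maximizers_exist by blast
  have a_budget: "mean_cost a \<le> ?E" by (rule mean_cost_right_of_min[OF a \<delta>(1)])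
  have b_budget: "?E \<le> mean_cost b" by (rule mean_cost_left_of_min[OF b \<delta>])
  have a_mean: "dual_obj r - (r + \<delta>) * (?E - mean_cost a) \<le> sample_mean N (\<lambda>j. g (a j))"
    using mean_value_at_maximizers[OF a] r_nonneg \<delta> by simp
  have b_mean: "dual_obj r - (r - \<delta>) * (?E - mean_cost b) \<le> sample_mean N (\<lambda>j. g (b j))"
    using mean_value_at_maximizers[OF b] \<delta> by simp
  define l where "l = (if mean_cost b = mean_cost a then 1 else (mean_cost b - ?E) / (mean_cost b - mean_cost a))"
  have l: "0 \<le> l" "l \<le> 1" using a_budget b_budget by (auto simp: l_def field_simps)
  have E_eq: "?E = mean_cost b - l * mean_cost b + l * mean_cost a"
    using a_budget b_budget by (auto simp: l_def field_simps)
  have "\<forall>j\<in>{1..N}. a j \<in> U \<and> b j \<in> U" using a b by (simp add: maximizers_def)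
  moreover have "l * mean_cost a + (1 - l) * mean_cost b \<le> ?E"
    unfolding E_eq by (simp add: algebra_simps)
  ultimately obtain Q where Q: "Q \<in> ambiguity p n U N uh eps"
    and Q_val: "(\<integral>u. g u \<partial>Q) = l * sample_mean N (\<lambda>j. g (a j)) + (1 - l) * sample_mean N (\<lambda>j. g (b j))"
    using mixture_in_ambiguity[OF _ l] by blast
  have "dual_obj r - 2 * \<delta> * (l * (?E - mean_cost a)) =
      l * (dual_obj r - (r + \<delta>) * (?E - mean_cost a)) + (1 - l) * (dual_obj r - (r - \<delta>) * (?E - mean_cost b))"
    unfolding E_eq by (simp add: algebra_simps)
  also have "\<dots> \<le> (\<integral>u. g u \<partial>Q)"
    unfolding Q_val using l a_mean b_mean by (intro add_mono mult_left_mono) auto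
  finally have "dual_obj r - 2 * \<delta> * (l * (?E - mean_cost a)) \<le> (\<integral>u. g u \<partial>Q)" .
  moreover have "2 * \<delta> * (l * (?E - mean_cost a)) \<le> 2 * \<delta> * (1 * ?E)"
    using l a_budget \<delta> by (intro mult_left_mono mult_mono) (auto simp: sample_mean_nonneg pnorm_pow_nonneg)
  ultimately show ?thesis using Q by (intro bexI[of _ Q]) auto
qed

lemma near_optimal_distribution:
  assumes "0 < \<delta>" and "0 < r \<Longrightarrow> \<delta> \<le> r"
  shows "\<exists>Q\<in>ambiguity p n U N uh eps. dual_obj r - 2 * \<delta> * eps powr p \<le> (\<integral>u. g u \<partial>Q)"
proof (cases "r = 0")
  case True
  obtain Q where "Q \<in> ambiguity p n U N uh eps" "dual_obj r - \<delta> * eps powr p \<le> (\<integral>u. g u \<partial>Q)"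
    using near_optimal_at_zero[OF True assms(1)] by blast
  moreover have "\<delta> * eps powr p \<le> 2 * \<delta> * eps powr p" using assms(1) eps_pos by simp
  ultimately show ?thesis by (intro bexI) auto
qed (use assms r_nonneg near_optimal_interior in auto)

theorem worst_case_expectation_eq_dual_min:
  "(SUP Q\<in>ambiguity p n U N uh eps. ereal (\<integral>u. g u \<partial>Q)) = ereal (dual_obj r)"
proof (rule antisym)
  show "(SUP Q\<in>ambiguity p n U N uh eps. ereal (\<integral>u. g u \<partial>Q)) \<le> ereal (dual_obj r)"
    using expectation_le_dual_obj r_nonneg by (auto intro: SUP_least)
next
  show "ereal (dual_obj r) \<le> (SUP Q\<in>ambiguity p n U N uh eps. ereal (\<integral>u. g u \<partial>Q))"
  proof (rule ereal_le_epsilon2)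
    fix e :: real assume e: "0 < e"
    have E: "0 < eps powr p" using eps_pos by simp
    define \<delta> where "\<delta> = (if 0 < r then min (e / (2 * eps powr p)) r else e / (2 * eps powr p))"
    have \<delta>: "0 < \<delta>" "0 < r \<Longrightarrow> \<delta> \<le> r" "2 * \<delta> * eps powr p \<le> e"
      using e E by (auto simp: \<delta>_def field_simps min_def)
    obtain Q where Q: "Q \<in> ambiguity p n U N uh eps"
      and val: "dual_obj r - 2 * \<delta> * eps powr p \<le> (\<integral>u. g u \<partial>Q)"
      using near_optimal_distribution[OF \<delta>(1,2)] by blast
    have "ereal (dual_obj r) \<le> ereal (\<integral>u. g u \<partial>Q) + ereal e"
      using val \<delta>(3) by simp
    also have "\<dots> \<le> (SUP Q\<in>ambiguity p n U N uh eps. ereal (\<integral>u. g u \<partial>Q)) + ereal e"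
      using Q by (intro add_right_mono SUP_upper)
    finally show "ereal (dual_obj r) \<le> (SUP Q\<in>ambiguity p n U N uh eps. ereal (\<integral>u. g u \<partial>Q)) + ereal e" .
  qed
qed

end

end

section \<open>Reformulation of W-DRAS\<close>

lemma inf_reformulation:
  fixes obj :: "'s \<Rightarrow> ereal" and val :: "'r \<Rightarrow> 'b \<Rightarrow> real"
  assumes upper: "\<And>\<rho> \<beta> s. feas \<rho> \<beta> s \<Longrightarrow> s \<in> S \<and> obj s \<le> ereal (val \<rho> \<beta>)"
    and attained: "\<And>s. s \<in> S \<Longrightarrow> \<exists>\<rho> \<beta>. feas \<rho> \<beta> s \<and> obj s = ereal (val \<rho> \<beta>)"
  shows "(INF s\<in>S. obj s) = Inf {ereal (val \<rho> \<beta>) | \<rho> \<beta> s. feas \<rho> \<beta> s}"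
    and "{s \<in> S. obj s = (INF s\<in>S. obj s)} =
      {s. \<exists>\<rho> \<beta>. feas \<rho> \<beta> s \<and> ereal (val \<rho> \<beta>) = Inf {ereal (val \<rho> \<beta>) | \<rho> \<beta> s. feas \<rho> \<beta> s}}"
proof -
  let ?V = "Inf {ereal (val \<rho> \<beta>) | \<rho> \<beta> s. feas \<rho> \<beta> s}"
  show val: "(INF s\<in>S. obj s) = ?V"
  proof (rule antisym)
    show "(INF s\<in>S. obj s) \<le> ?V"
      by (rule Inf_greatest) (auto intro: INF_lower2 dest: upper)
    show "?V \<le> (INF s\<in>S. obj s)"
      by (rule INF_greatest) (metis (mono_tags, lifting) Inf_lower attained mem_Collect_eq)
  qed
  show "{s \<in> S. obj s = (INF s\<in>S. obj s)} = {s. \<exists>\<rho> \<beta>. feas \<rho> \<beta> s \<and> ereal (val \<rho> \<beta>) = ?V}"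
  proof (intro set_eqI iffI)
    fix s assume "s \<in> {s \<in> S. obj s = (INF s\<in>S. obj s)}"
    then have "s \<in> S" "obj s = ?V" using val by auto
    with attained show "s \<in> {s. \<exists>\<rho> \<beta>. feas \<rho> \<beta> s \<and> ereal (val \<rho> \<beta>) = ?V}" by fastforce
  next
    fix s assume "s \<in> {s. \<exists>\<rho> \<beta>. feas \<rho> \<beta> s \<and> ereal (val \<rho> \<beta>) = ?V}"
    then obtain \<rho> \<beta> where feas: "feas \<rho> \<beta> s" and eq: "ereal (val \<rho> \<beta>) = ?V" by blast
    have s: "s \<in> S" and "obj s \<le> ?V" using upper[OF feas] eq by auto
    moreover have "?V \<le> obj s" unfolding val[symmetric] using s by (rule INF_lower)
    ultimately show "s \<in> {s \<in> S. obj s = (INF s\<in>S. obj s)}" using val by simp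
  qed
qed

definition robust_obj :: "real \<Rightarrow> nat \<Rightarrow> real \<Rightarrow> real \<Rightarrow> (nat \<Rightarrow> real) \<Rightarrow> real" where
  "robust_obj p N eps \<rho> \<beta> = eps powr p * \<rho> + sample_mean N \<beta>"

context recourse_costs
begin

context
  fixes p T :: real and U :: "(nat \<Rightarrow> real) set" and N :: nat and uh :: "nat \<Rightarrow> nat \<Rightarrow> real"
    and eps :: real
  assumes p: "0 < p" and U: "compact U" "U \<noteq> {}" and uh: "\<forall>j\<in>{1..N}. uh j \<in> U"
    and N: "1 \<le> N" and eps: "0 < eps"
begin

lemma wasserstein_dro_greedy_cost: "wasserstein_dro p (greedy_cost n c d C s) U N uh eps"
  by unfold_locales (use p U uh N eps continuous_on_greedy_cost in auto)

lemma wdras_obj_eq_dual_min: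
  obtains r where "0 \<le> r" "\<forall>\<rho>\<ge>0. wasserstein_dro.dual_obj n p (greedy_cost n c d C s) U N uh eps r \<le>
      wasserstein_dro.dual_obj n p (greedy_cost n c d C s) U N uh eps \<rho>"
    "wdras_obj p n c d C U N uh eps s = ereal (wasserstein_dro.dual_obj n p (greedy_cost n c d C s) U N uh eps r)"
proof -
  interpret D: wasserstein_dro n p "greedy_cost n c d C s" U N uh eps
    by (rule wasserstein_dro_greedy_cost)
  obtain r where "0 \<le> r" "\<forall>\<rho>\<ge>0. D.dual_obj r \<le> D.dual_obj \<rho>" using D.dual_obj_has_min by blast
  moreover from this have "wdras_obj p n c d C U N uh eps s = ereal (D.dual_obj r)"
    unfolding wdras_obj_def recourse_eq_greedy_cost by (rule D.worst_case_expectation_eq_dual_min)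
  ultimately show ?thesis using that by blast
qed

lemma wdras_obj_le_robust_obj:
  assumes "robust_feas p T U N uh \<rho> \<beta> s"
  shows "wdras_obj p n c d C U N uh eps s \<le> ereal (robust_obj p N eps \<rho> \<beta>)"
proof -
  interpret D: wasserstein_dro n p "greedy_cost n c d C s" U N uh eps
    by (rule wasserstein_dro_greedy_cost)
  obtain r where r: "\<forall>\<rho>\<ge>0. D.dual_obj r \<le> D.dual_obj \<rho>"
    and obj: "wdras_obj p n c d C U N uh eps s = ereal (D.dual_obj r)"
    using wdras_obj_eq_dual_min by blast
  have "D.inner_sup \<rho> (uh j) \<le> \<beta> j" if "j \<in> {1..N}" for j
    using D.inner_sup_attained[of \<rho> "uh j"] assms that by (auto simp: robust_feas_def)
  then have "sample_mean N (\<lambda>j. D.inner_sup \<rho> (uh j)) \<le> sample_mean N \<beta>"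
    by (rule sample_mean_mono)
  then have "D.dual_obj \<rho> \<le> robust_obj p N eps \<rho> \<beta>"
    unfolding D.dual_obj_def robust_obj_def by simp
  moreover have "0 \<le> \<rho>" using assms by (simp add: robust_feas_def)
  ultimately show ?thesis using r obj by force
qed

lemma wdras_obj_attained_by_robust:
  assumes "s \<in> sched n T"
  shows "\<exists>\<rho> \<beta>. robust_feas p T U N uh \<rho> \<beta> s \<and> wdras_obj p n c d C U N uh eps s = ereal (robust_obj p N eps \<rho> \<beta>)"
proof -
  interpret D: wasserstein_dro n p "greedy_cost n c d C s" U N uh eps
    by (rule wasserstein_dro_greedy_cost)
  obtain r where r: "0 \<le> r" and obj: "wdras_obj p n c d C U N uh eps s = ereal (D.dual_obj r)"
    using wdras_obj_eq_dual_min by blast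
  have "robust_feas p T U N uh r (\<lambda>j. D.inner_sup r (uh j)) s"
    unfolding robust_feas_def using assms r D.inner_sup_upper by auto
  moreover have "D.dual_obj r = robust_obj p N eps r (\<lambda>j. D.inner_sup r (uh j))"
    unfolding D.dual_obj_def robust_obj_def ..
  ultimately show ?thesis using obj by metis
qed

lemma wdras_eq_program:
  assumes feas: "\<And>\<rho> \<beta> s. F \<rho> \<beta> s \<longleftrightarrow> robust_feas p T U N uh \<rho> \<beta> s"
    and obj: "\<And>\<rho> \<beta>. V \<rho> \<beta> = robust_obj p N eps \<rho> \<beta>"
  shows "wdras_val p n T c d C U N uh eps = Inf {ereal (V \<rho> \<beta>) | \<rho> \<beta> s. F \<rho> \<beta> s} \<and>
    wdras_opt p n T c d C U N uh eps =
      {s. \<exists>\<rho> \<beta>. F \<rho> \<beta> s \<and> ereal (V \<rho> \<beta>) = Inf {ereal (V \<rho> \<beta>) | \<rho> \<beta> s. F \<rho> \<beta> s}}"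
proof -
  have upper: "F \<rho> \<beta> s \<Longrightarrow> s \<in> sched n T \<and> wdras_obj p n c d C U N uh eps s \<le> ereal (V \<rho> \<beta>)"
    for \<rho> \<beta> s
    unfolding feas obj using wdras_obj_le_robust_obj by (simp add: robust_feas_def)
  have attained: "s \<in> sched n T \<Longrightarrow> \<exists>\<rho> \<beta>. F \<rho> \<beta> s \<and> wdras_obj p n c d C U N uh eps s = ereal (V \<rho> \<beta>)"
    for s
    unfolding feas obj by (rule wdras_obj_attained_by_robust)
  note reformulation = inf_reformulation[where feas = F and S = "sched n T"
      and obj = "wdras_obj p n c d C U N uh eps" and val = V, OF upper attained]
  show ?thesis
    unfolding wdras_opt_def wdras_val_def by (intro conjI reformulation)
qed

end

end

theorem theorem3:
  fixes n N :: nat and T C eps :: real and c d :: "nat \<Rightarrow> real"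
    and U :: "(nat \<Rightarrow> real) set" and uh :: "nat \<Rightarrow> nat \<Rightarrow> real"
  assumes "1 \<le> n" and "1 \<le> N" and "0 < T"
    and "\<forall>i\<in>{1..n}. 0 \<le> c i" and "\<forall>i\<in>{1..n}. 0 \<le> d i" and "0 \<le> C"
    and "\<forall>i\<in>{1..n-1}. d (i+1) - d i \<le> c (i+1)"
    and "U \<subseteq> vecs n" and "U \<noteq> {}" and "compact U" and "convex_vecs n U"
    and "\<forall>j\<in>{1..N}. uh j \<in> U"
    and "0 < eps"
  shows "(wdras_val 1 n T c d C U N uh eps = prog1_val n T c d C U N uh eps \<and>
          wdras_opt 1 n T c d C U N uh eps = prog1_opt n T c d C U N uh eps) \<and>
         (wdras_val 2 n T c d C U N uh eps = prog2_val n T c d C U N uh eps \<and>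
          wdras_opt 2 n T c d C U N uh eps = prog2_opt n T c d C U N uh eps)"
proof -
  interpret recourse_costs n c d C
    using assms by unfold_locales auto
  have "prog1_obj N eps \<rho> \<beta> = robust_obj 1 N eps \<rho> \<beta>"
    and "prog2_obj N eps \<rho> \<beta> = robust_obj 2 N eps \<rho> \<beta>" for \<rho> \<beta>
    using assms by (simp_all add: prog1_obj_def prog2_obj_def robust_obj_def sample_mean_def powr_numeral)
  with assms show ?thesis
    unfolding prog1_val_def prog1_opt_def prog2_val_def prog2_opt_def
    by (intro conjI wdras_eq_program prog1_feas_iff_robust prog2_feas_iff_robust) auto
qed

end
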